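(* Let $T_1$ and $T_2$ be disjoint trees, let $u$ be a weak support vertex of $T_1$ and $v$ a weak support vertex of $T_2$, and let $T_{uv}$ be the tree obtained from $T_1\cup T_2$ by adding the edge $uv$ and deleting the leaf neighbor of $u$ and the leaf neighbor of $v$. If both $T_1$ and $T_2$ are in Class $3$, then $T_{uv}$ is in Class $3$.
   Context: A weak support vertex is a vertex adjacent to exactly one leaf. A tree is in Class $3$ if its total domination subdivision number equals $3$, where the total domination subdivision number of a graph is the minimum number of edges that must be subdivided (each at most once) in order to increase the total domination number $\gamma_t$ (the minimum size of a vertex set $S$ such that every vertex has a neighbor in $S$). *)

theory Defs
  imports Main
begin

type_synonym 'a graph = "'a set \<times> 'a set set"

definition verts :: "'a graph \<Rightarrow> 'a set" where "verts G = fst G"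
definition edges :: "'a graph \<Rightarrow> 'a set set" where "edges G = snd G"

definition adj :: "'a graph \<Rightarrow> 'a \<Rightarrow> 'a \<Rightarrow> bool" where
  "adj G x y \<longleftrightarrow> {x, y} \<in> edges G"

definition simple_graph :: "'a graph \<Rightarrow> bool" where
  "simple_graph G \<longleftrightarrow> finite (verts G) \<and>
     (\<forall>e\<in>edges G. \<exists>x y. x \<noteq> y \<and> x \<in> verts G \<and> y \<in> verts G \<and> e = {x, y})"

definition connected_graph :: "'a graph \<Rightarrow> bool" where
  "connected_graph G \<longleftrightarrow>
     (\<forall>x\<in>verts G. \<forall>y\<in>verts G. (x, y) \<in> {(a, b). adj G a b}\<^sup>*)"

definition is_tree :: "'a graph \<Rightarrow> bool" where
  "is_tree G \<longleftrightarrow> simple_graph G \<and> verts G \<noteq> {} \<and> connected_graph G \<and>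
     card (edges G) = card (verts G) - 1"

definition degree :: "'a graph \<Rightarrow> 'a \<Rightarrow> nat" where
  "degree G x = card {y \<in> verts G. adj G x y}"

definition is_leaf :: "'a graph \<Rightarrow> 'a \<Rightarrow> bool" where
  "is_leaf G x \<longleftrightarrow> x \<in> verts G \<and> degree G x = 1"

definition weak_support :: "'a graph \<Rightarrow> 'a \<Rightarrow> bool" where
  "weak_support G x \<longleftrightarrow> x \<in> verts G \<and> card {y \<in> verts G. adj G x y \<and> is_leaf G y} = 1"

definition total_dominating :: "'a graph \<Rightarrow> 'a set \<Rightarrow> bool" where
  "total_dominating G S \<longleftrightarrow> S \<subseteq> verts G \<and> (\<forall>v\<in>verts G. \<exists>u\<in>S. adj G v u)"

definition gamma_t :: "'a graph \<Rightarrow> nat" where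
  "gamma_t G = Min (card ` {S. total_dominating G S})"

(* subdivide each edge of F once; the new vertex on edge e is Inr e *)
definition subdivide :: "'a graph \<Rightarrow> 'a set set \<Rightarrow> ('a + 'a set) graph" where
  "subdivide G F =
    (Inl ` verts G \<union> Inr ` F,
     {Inl ` e | e. e \<in> edges G - F} \<union>
     {{Inl x, Inr e} | x e. e \<in> F \<and> x \<in> e})"

definition increases_gamma_t :: "'a graph \<Rightarrow> 'a set set \<Rightarrow> bool" where
  "increases_gamma_t G F \<longleftrightarrow> F \<subseteq> edges G \<and> gamma_t (subdivide G F) > gamma_t G"

definition sd_gamma_t :: "'a graph \<Rightarrow> nat" where
  "sd_gamma_t G = (LEAST k. \<exists>F. increases_gamma_t G F \<and> card F = k)"

definition class3 :: "'a graph \<Rightarrow> bool" where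
  "class3 G \<longleftrightarrow> (\<exists>F. increases_gamma_t G F) \<and> sd_gamma_t G = 3"

definition join_trees :: "'a graph \<Rightarrow> 'a graph \<Rightarrow> 'a \<Rightarrow> 'a \<Rightarrow> 'a \<Rightarrow> 'a \<Rightarrow> 'a graph" where
  "join_trees T1 T2 u u' v v' =
    ((verts T1 \<union> verts T2) - {u', v'},
     {e \<in> edges T1 \<union> edges T2 \<union> {{u, v}}. u' \<notin> e \<and> v' \<notin> e})"

end

theory Submission
  imports Defs
begin

text \<open>
  Cut a tree \<open>T\<close> at the edge \<open>uu'\<close> to its leaf \<open>u'\<close> and consider the piece \<open>W = T - u'\<close>, rooted
  at \<open>u\<close> (with the subdivision vertices of any subdivided edges of \<open>W\<close>). Record four parameters:
  the least size of a set \<open>S \<subseteq> W\<close> totally dominating \<open>W - u\<close>, where additionally \<open>u \<in> S\<close> and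
  \<open>u\<close> is dominated inside \<open>W\<close> (\<open>pA\<close>), only \<open>u \<in> S\<close> (\<open>pB\<close>), only \<open>u\<close> dominated (\<open>pC\<close>), or
  nothing (\<open>pD\<close>). Then \<open>\<gamma>\<^sub>t(T) = pA\<close>, and subdividing \<open>uu'\<close> as well gives \<open>pB + 1\<close>.
  So \<open>sd\<^sub>\<gamma>\<^sub>t(T) = 3\<close> becomes a list of relations: \<open>pA = pB + 1\<close>, \<open>pB \<le> pC\<close>, \<open>pB(F) \<le> pB\<close> for
  one subdivided edge, \<open>pA(F) \<le> pA\<close> for two, and some three edges raise \<open>pA\<close> by two or some two
  edges raise \<open>pB\<close> by one. Moreover \<open>pD = pB - 1\<close>: an exchange argument over the branches of
  \<open>T - u\<close> produces an optimal \<open>pB\<close>-set in which every neighbour of \<open>u\<close> has a second dominator,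
  so \<open>u\<close> can be dropped.

  The tree \<open>T\<^sub>u\<^sub>v\<close> consists of the two pieces joined by the edge \<open>uv\<close> (a path \<open>u z v\<close> once \<open>uv\<close>
  is subdivided), and a total dominating set of it splits into partial ones of the pieces whose
  flags depend on which of \<open>u, v, z\<close> it contains. With the relations above this yields
  \<open>\<gamma>\<^sub>t(T\<^sub>u\<^sub>v) = pB\<^sub>1 + pB\<^sub>2\<close>, no increase when at most two edges are subdivided, and an increase for a
  suitable set of three edges.
\<close>

section \<open>Adjacency in a subdivided graph\<close>

lemma adj_commute: "adj G x y = adj G y x"
  by (simp add: adj_def insert_commute)

lemma image_Inl_eq_doubleton: "(Inl ` e = {Inl a, Inl b}) \<longleftrightarrow> e = {a, b}"
proof
  assume h: "Inl ` e = {Inl a, Inl b}"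
  show "e = {a, b}"
  proof (rule set_eqI)
    fix x show "x \<in> e \<longleftrightarrow> x \<in> {a, b}"
      using arg_cong[OF h, of "\<lambda>X. Inl x \<in> X"] by auto
  qed
qed simp

lemma verts_subdivide: "verts (subdivide G F) = Inl ` verts G \<union> Inr ` F"
  by (simp add: subdivide_def verts_def)

lemma adj_subdivide_Inl_Inl: "adj (subdivide G F) (Inl a) (Inl b) \<longleftrightarrow> {a, b} \<in> edges G - F"
proof -
  have "{Inl a, Inl b} \<noteq> {Inl x, Inr e}" for x :: 'a and e :: "'a set"
    by (auto simp: doubleton_eq_iff)
  moreover have "({Inl a, Inl b} = Inl ` e) \<longleftrightarrow> e = {a,b}" for e
    using image_Inl_eq_doubleton[of e a b] by auto
  ultimately show ?thesis
    unfolding adj_def edges_def subdivide_def snd_conv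
    by (smt (verit, ccfv_threshold) Diff_iff Un_iff mem_Collect_eq)
qed

lemma adj_subdivide_Inl_Inr: "adj (subdivide G F) (Inl a) (Inr e) \<longleftrightarrow> e \<in> F \<and> a \<in> e"
proof -
  have "Inl ` e' \<noteq> {Inl a, Inr e}" for e' by auto
  then show ?thesis
    by (auto simp: adj_def edges_def subdivide_def doubleton_eq_iff)
qed

lemma adj_subdivide_Inr_Inl: "adj (subdivide G F) (Inr e) (Inl a) \<longleftrightarrow> e \<in> F \<and> a \<in> e"
  using adj_subdivide_Inl_Inr adj_commute by metis

lemma adj_subdivide_Inr_Inr: "\<not> adj (subdivide G F) (Inr e) (Inr e')"
  by (auto simp: adj_def edges_def subdivide_def doubleton_eq_iff)

lemmas adj_subdivide =
  adj_subdivide_Inl_Inl adj_subdivide_Inl_Inr adj_subdivide_Inr_Inl adj_subdivide_Inr_Inr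

lemma adj_subdivide_empty: "adj (subdivide G {}) (Inl a) (Inl b) \<longleftrightarrow> adj G a b"
  by (simp add: adj_subdivide adj_def[of G])

lemma total_dominating_subdivide_empty:
  "total_dominating (subdivide G {}) (Inl ` S) \<longleftrightarrow> total_dominating G S"
  unfolding total_dominating_def verts_subdivide by (auto simp: adj_subdivide_empty)

lemma gamma_t_subdivide_empty: "gamma_t (subdivide G {}) = gamma_t G"
proof -
  have "total_dominating (subdivide G {}) S' \<Longrightarrow> S' \<in> range (image Inl)" for S'
    unfolding total_dominating_def verts_subdivide by (metis Un_empty_right image_empty subset_imageE rangeI)
  then have sets: "{S. total_dominating (subdivide G {}) S} = image Inl ` {S. total_dominating G S}"
    using total_dominating_subdivide_empty by blast
  have cards: "card ` (image Inl ` X) = card ` X" for X :: "'a set set"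
    by (simp add: image_image card_image)
  show ?thesis
    unfolding gamma_t_def sets cards ..
qed

section \<open>Partial total domination of a rooted piece\<close>

definition dominates :: "'b graph \<Rightarrow> 'b set \<Rightarrow> 'b set \<Rightarrow> bool" where
  "dominates G S X \<longleftrightarrow> (\<forall>x\<in>X. \<exists>s\<in>S. adj G x s)"

text \<open>The root \<open>r\<close> is where \<open>W\<close> is attached to the rest of the graph, so it may be dominated
  from outside.\<close>

definition partial_tds :: "'b graph \<Rightarrow> 'b set \<Rightarrow> 'b \<Rightarrow> bool \<Rightarrow> bool \<Rightarrow> 'b set \<Rightarrow> bool" where
  "partial_tds G W r i d S \<longleftrightarrow>
     S \<subseteq> W \<and> (i \<longrightarrow> r \<in> S) \<and> dominates G S (W - {r}) \<and> (d \<longrightarrow> dominates G S {r})"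

definition gamma_partial :: "'b graph \<Rightarrow> 'b set \<Rightarrow> 'b \<Rightarrow> bool \<Rightarrow> bool \<Rightarrow> nat" where
  "gamma_partial G W r i d = Min (card ` {S. partial_tds G W r i d S})"

lemma finite_partial_tds: "finite W \<Longrightarrow> finite {S. partial_tds G W r i d S}"
  by (rule finite_subset[of _ "Pow W"]) (auto simp: partial_tds_def)

lemma gamma_partial_le:
  "finite W \<Longrightarrow> partial_tds G W r i d S \<Longrightarrow> gamma_partial G W r i d \<le> card S"
  unfolding gamma_partial_def by (rule Min_le) (simp_all add: finite_partial_tds)

lemma gamma_partial_attained:
  assumes "finite W" and "partial_tds G W r i d S"
  shows "\<exists>S'. partial_tds G W r i d S' \<and> card S' = gamma_partial G W r i d"
proof -
  have "gamma_partial G W r i d \<in> card ` {S. partial_tds G W r i d S}"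
    unfolding gamma_partial_def using assms by (intro Min_in) (auto simp: finite_partial_tds)
  then show ?thesis by auto
qed

lemma dominates_cong:
  assumes "S \<subseteq> W" and "X \<subseteq> W" and "\<forall>x\<in>W. \<forall>y\<in>W. adj G x y = adj G' x y"
  shows "dominates G S X = dominates G' S X"
  unfolding dominates_def using assms by (meson subsetD)

lemma partial_tds_cong:
  assumes "r \<in> W" and "\<forall>x\<in>W. \<forall>y\<in>W. adj G x y = adj G' x y"
  shows "partial_tds G W r i d S = partial_tds G' W r i d S"
proof (cases "S \<subseteq> W")
  case True
  then show ?thesis
    unfolding partial_tds_def using dominates_cong[OF True _ assms(2)] assms(1) by auto
qed (simp add: partial_tds_def)

lemma gamma_partial_cong:
  assumes "r \<in> W" and "\<forall>x\<in>W. \<forall>y\<in>W. adj G x y = adj G' x y"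
  shows "gamma_partial G W r i d = gamma_partial G' W r i d"
proof -
  have "{S. partial_tds G W r i d S} = {S. partial_tds G' W r i d S}"
    using partial_tds_cong[OF assms] by blast
  then show ?thesis unfolding gamma_partial_def by simp
qed

lemma partial_tds_weaken:
  "partial_tds G W r i d S \<Longrightarrow> (i' \<longrightarrow> i) \<Longrightarrow> (d' \<longrightarrow> d) \<Longrightarrow> partial_tds G W r i' d' S"
  unfolding partial_tds_def by blast

lemma finite_tds: "finite (verts G) \<Longrightarrow> finite {S. total_dominating G S}"
  by (rule finite_subset[of _ "Pow (verts G)"]) (auto simp: total_dominating_def)

lemma gamma_t_le: "finite (verts G) \<Longrightarrow> total_dominating G S \<Longrightarrow> gamma_t G \<le> card S"
  unfolding gamma_t_def by (rule Min_le) (simp_all add: finite_tds)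

lemma gamma_t_attained:
  assumes "finite (verts G)" and "total_dominating G S"
  shows "\<exists>S'. total_dominating G S' \<and> card S' = gamma_t G"
proof -
  have "gamma_t G \<in> card ` {S. total_dominating G S}"
    unfolding gamma_t_def using assms by (intro Min_in) (auto simp: finite_tds)
  then show ?thesis by auto
qed

locale rooted_piece =
  fixes G :: "'b graph" and W :: "'b set" and r :: 'b
  assumes finite_piece: "finite W" and root_in: "r \<in> W"
    and no_isolated: "\<forall>x\<in>W. \<exists>y\<in>W. adj G x y"
begin

abbreviation "pA \<equiv> gamma_partial G W r True True"
abbreviation "pB \<equiv> gamma_partial G W r True False"
abbreviation "pC \<equiv> gamma_partial G W r False True"
abbreviation "pD \<equiv> gamma_partial G W r False False"

lemma partial_tds_whole: "partial_tds G W r i d W"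
  using no_isolated root_in unfolding partial_tds_def dominates_def by auto

lemma gamma_partial_witness: "\<exists>S. partial_tds G W r i d S \<and> card S = gamma_partial G W r i d"
  using gamma_partial_attained[OF finite_piece partial_tds_whole] .

lemma gamma_partial_le_card: "partial_tds G W r i d S \<Longrightarrow> gamma_partial G W r i d \<le> card S"
  using gamma_partial_le[OF finite_piece] .

lemma gamma_partial_le_card_weaken:
  "partial_tds G W r i d S \<Longrightarrow> (i' \<longrightarrow> i) \<Longrightarrow> (d' \<longrightarrow> d) \<Longrightarrow> gamma_partial G W r i' d' \<le> card S"
  by (rule gamma_partial_le_card, rule partial_tds_weaken)

lemma partial_tds_finite: "partial_tds G W r i d S \<Longrightarrow> finite S"
  using finite_piece unfolding partial_tds_def by (auto intro: finite_subset)

lemma gamma_partial_mono: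
  "(i' \<longrightarrow> i) \<Longrightarrow> (d' \<longrightarrow> d) \<Longrightarrow> gamma_partial G W r i' d' \<le> gamma_partial G W r i d"
proof -
  assume "i' \<longrightarrow> i" "d' \<longrightarrow> d"
  moreover obtain S where "partial_tds G W r i d S" "card S = gamma_partial G W r i d"
    using gamma_partial_witness by blast
  ultimately show ?thesis using gamma_partial_le_card_weaken by metis
qed

lemma partial_tds_insert:
  assumes "partial_tds G W r i d S" and "x \<in> W"
    and "i' \<longrightarrow> i \<or> x = r" and "d' \<longrightarrow> d \<or> adj G r x"
  shows "partial_tds G W r i' d' (insert x S)"
  using assms unfolding partial_tds_def dominates_def by auto

lemma gamma_partial_insert_le:
  assumes "x \<in> W" and "i' \<longrightarrow> i \<or> x = r" and "d' \<longrightarrow> d \<or> adj G r x"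
  shows "gamma_partial G W r i' d' \<le> gamma_partial G W r i d + 1"
proof -
  obtain S where S: "partial_tds G W r i d S" "card S = gamma_partial G W r i d"
    using gamma_partial_witness by blast
  have "gamma_partial G W r i' d' \<le> card (insert x S)"
    by (rule gamma_partial_le_card, rule partial_tds_insert[OF S(1) assms])
  also have "\<dots> \<le> card S + 1"
    using partial_tds_finite[OF S(1)] by (simp add: card_insert_if)
  finally show ?thesis using S(2) by simp
qed

lemma pA_le_Suc_pB: "pA \<le> pB + 1"
proof -
  obtain y where "y \<in> W" "adj G r y" using no_isolated root_in by blast
  then show ?thesis by (intro gamma_partial_insert_le) auto
qed

lemma pB_le_Suc_pD: "pB \<le> pD + 1"
  using root_in by (intro gamma_partial_insert_le) auto

lemma pA_le_Suc_pC: "pA \<le> pC + 1"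
  using root_in by (intro gamma_partial_insert_le) auto

lemma pB_pos: "1 \<le> pB"
proof -
  obtain S where S: "partial_tds G W r True False S" "card S = pB"
    using gamma_partial_witness by blast
  then have "r \<in> S" "finite S" using partial_tds_finite unfolding partial_tds_def by auto
  then show ?thesis using S(2) by (metis One_nat_def Suc_leI card_gt_0_iff empty_iff)
qed

lemma partial_tds_exchange:
  assumes S: "partial_tds G W r True False S" and S': "partial_tds G W r True False S'"
    and K: "K \<subseteq> W - {r}" and closed: "\<forall>x\<in>K. \<forall>t\<in>W - {r}. adj G x t \<longrightarrow> t \<in> K"
  shows "partial_tds G W r True False ((S - K) \<union> (S' \<inter> K))"
  unfolding partial_tds_def
proof (intro conjI impI)
  have SW: "S \<subseteq> W" "S' \<subseteq> W" and rS: "r \<in> S" using S S' unfolding partial_tds_def by auto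
  show "S - K \<union> S' \<inter> K \<subseteq> W" using SW by blast
  show "r \<in> S - K \<union> S' \<inter> K" using rS K by blast
  show "dominates G (S - K \<union> S' \<inter> K) (W - {r})"
    unfolding dominates_def
  proof
    fix x assume x: "x \<in> W - {r}"
    show "\<exists>s\<in>S - K \<union> S' \<inter> K. adj G x s"
    proof (cases "x \<in> K")
      case True
      obtain s where s: "s \<in> S'" "adj G x s"
        using S' x unfolding partial_tds_def dominates_def by blast
      then have "s = r \<or> s \<in> K" using closed True SW by blast
      then show ?thesis using s rS K by blast
    next
      case False
      obtain s where s: "s \<in> S" "adj G x s"
        using S x unfolding partial_tds_def dominates_def by blast
      then have "s \<notin> K" using closed x False adj_commute by metis
      then show ?thesis using s by blast
    qed
  qed
qed simp

lemma card_exchange_le: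
  assumes S: "partial_tds G W r True False S" and S': "partial_tds G W r True False S'"
    and optimal: "card S' \<le> pB"
    and K: "K \<subseteq> W - {r}" and closed: "\<forall>x\<in>K. \<forall>t\<in>W - {r}. adj G x t \<longrightarrow> t \<in> K"
  shows "card ((S - K) \<union> (S' \<inter> K)) \<le> card S"
proof -
  have fin: "finite S" "finite S'" using partial_tds_finite S S' by auto
  have "pB \<le> card ((S' - K) \<union> (S \<inter> K))"
    by (rule gamma_partial_le_card, rule partial_tds_exchange[OF S' S K closed])
  also have "\<dots> = card (S' - K) + card (S \<inter> K)" using fin by (intro card_Un_disjoint) auto
  finally have "pB \<le> card (S' - K) + card (S \<inter> K)" .
  moreover have "card ((S - K) \<union> (S' \<inter> K)) = card (S - K) + card (S' \<inter> K)"
    using fin by (intro card_Un_disjoint) auto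
  ultimately show ?thesis
    using card_Int_Diff[OF fin(1), of K] card_Int_Diff[OF fin(2), of K] optimal by linarith
qed

end

lemma rooted_piece_cong:
  assumes "rooted_piece G W r" and "\<forall>x\<in>W. \<forall>y\<in>W. adj G x y = adj G' x y"
  shows "rooted_piece G' W r"
  using assms unfolding rooted_piece_def by blast

lemma gamma_t_eqI:
  assumes "finite (verts G)" and "total_dominating G S" and "card S \<le> k"
    and "\<And>S. total_dominating G S \<Longrightarrow> k \<le> card S"
  shows "gamma_t G = k"
proof -
  obtain S' where S': "total_dominating G S'" "card S' = gamma_t G"
    using gamma_t_attained[OF assms(1,2)] by blast
  then have "k \<le> gamma_t G" using assms(4)[OF S'(1)] by simp
  moreover have "gamma_t G \<le> k" using gamma_t_le[OF assms(1,2)] assms(3) by simp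
  ultimately show ?thesis by simp
qed

locale attached_piece = rooted_piece +
  assumes piece_in_verts: "W \<subseteq> verts G"
    and piece_closed: "\<forall>x\<in>W - {r}. \<forall>y. adj G x y \<longrightarrow> y \<in> W"
begin

lemma partial_tds_restrict:
  assumes "total_dominating G S"
  shows "partial_tds G W r (r \<in> S) (dominates G (S \<inter> W) {r}) (S \<inter> W)"
proof -
  have "dominates G (S \<inter> W) (W - {r})"
    unfolding dominates_def
  proof
    fix x assume x: "x \<in> W - {r}"
    then have "x \<in> verts G" using piece_in_verts by blast
    then obtain s where s: "s \<in> S" "adj G x s"
      using assms unfolding total_dominating_def by blast
    moreover have "s \<in> W" using piece_closed x s(2) by blast
    ultimately show "\<exists>s\<in>S \<inter> W. adj G x s" by blast
  qed
  then show ?thesis using root_in unfolding partial_tds_def by simp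
qed

end

locale pendant_piece = attached_piece +
  fixes p
  assumes pendant_notin: "p \<notin> W"
    and verts_eq: "verts G = insert p W"
    and adj_pendant: "\<forall>y. adj G p y \<longleftrightarrow> y = r"
begin

lemma finite_verts: "finite (verts G)"
  using verts_eq finite_piece by simp

lemma card_tds_lower:
  assumes S: "total_dominating G S"
  shows "pA \<le> card S"
proof -
  have fin: "finite S"
    using S finite_verts unfolding total_dominating_def by (auto intro: finite_subset)
  have "r \<in> S" using S verts_eq adj_pendant unfolding total_dominating_def by auto
  then have restr: "partial_tds G W r True (dominates G (S \<inter> W) {r}) (S \<inter> W)"
    using partial_tds_restrict[OF S] by simp
  show ?thesis
  proof (cases "dominates G (S \<inter> W) {r}")
    case True
    then have "pA \<le> card (S \<inter> W)" using gamma_partial_le_card restr by simp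
    then show ?thesis using card_mono[OF fin, of "S \<inter> W"] by simp
  next
    case False
    obtain s where s: "s \<in> S" "adj G r s"
      using S root_in verts_eq unfolding total_dominating_def by blast
    then have "s \<notin> W" using False unfolding dominates_def by blast
    moreover have "s \<in> insert p W" using s(1) S verts_eq unfolding total_dominating_def by auto
    ultimately have "p \<in> S" using s(1) by auto
    then have "S = insert p (S \<inter> W)"
      using S verts_eq unfolding total_dominating_def by auto
    moreover have "card (insert p (S \<inter> W)) = card (S \<inter> W) + 1"
      using fin pendant_notin by simp
    ultimately have "card S = card (S \<inter> W) + 1" by simp
    moreover have "pB \<le> card (S \<inter> W)" using gamma_partial_le_card restr False by simp
    ultimately show ?thesis using pA_le_Suc_pB by simp
  qed
qed

lemma gamma_t_eq: "gamma_t G = pA"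
proof -
  obtain S where S: "partial_tds G W r True True S" "card S = pA"
    using gamma_partial_witness by blast
  have "total_dominating G S"
    using S(1) verts_eq adj_pendant unfolding total_dominating_def partial_tds_def dominates_def
    by auto
  then show ?thesis
    by (rule gamma_t_eqI[OF finite_verts]) (simp_all add: S(2) card_tds_lower)
qed

end

locale pendant_path_piece = attached_piece +
  fixes w p
  assumes middle_notin: "w \<notin> W" and pendant_notin: "p \<notin> W" and middle_ne_pendant: "w \<noteq> p"
    and verts_eq: "verts G = insert w (insert p W)"
    and adj_pendant: "\<forall>y. adj G p y \<longleftrightarrow> y = w"
    and adj_middle: "\<forall>y. adj G w y \<longleftrightarrow> (y = r \<or> y = p)"
begin

lemma finite_verts: "finite (verts G)"
  using verts_eq finite_piece by simp

lemma card_tds_lower: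
  assumes S: "total_dominating G S"
  shows "pB + 1 \<le> card S"
proof -
  have fin: "finite S"
    using S finite_verts unfolding total_dominating_def by (auto intro: finite_subset)
  have wS: "w \<in> S" using S verts_eq adj_pendant unfolding total_dominating_def by auto
  have restr: "partial_tds G W r (r \<in> S) False (S \<inter> W)"
    using partial_tds_weaken[OF partial_tds_restrict[OF S]] by simp
  show ?thesis
  proof (cases "r \<in> S")
    case True
    have "card (insert w (S \<inter> W)) \<le> card S"
      using wS by (intro card_mono[OF fin]) auto
    then have "card (S \<inter> W) + 1 \<le> card S"
      using fin middle_notin by simp
    moreover have "pB \<le> card (S \<inter> W)" using gamma_partial_le_card restr True by simp
    ultimately show ?thesis by simp
  next
    case False
    then have "p \<in> S"
      using S verts_eq adj_middle unfolding total_dominating_def by auto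
    have "card (insert w (insert p (S \<inter> W))) \<le> card S"
      using wS \<open>p \<in> S\<close> by (intro card_mono[OF fin]) auto
    then have "card (S \<inter> W) + 2 \<le> card S"
      using fin middle_notin pendant_notin middle_ne_pendant by simp
    moreover have "pB \<le> card (S \<inter> W) + 1"
      using gamma_partial_insert_le[OF root_in, of True False False False] restr False
        gamma_partial_le_card[OF restr] by simp
    ultimately show ?thesis by simp
  qed
qed

lemma gamma_t_eq: "gamma_t G = pB + 1"
proof -
  obtain S where S: "partial_tds G W r True False S" "card S = pB"
    using gamma_partial_witness by blast
  have "w \<notin> S" using S(1) middle_notin unfolding partial_tds_def by auto
  then have card: "card (insert w S) = pB + 1"
    using S partial_tds_finite by simp
  have "total_dominating G (insert w S)"
    unfolding total_dominating_def
  proof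
    show "insert w S \<subseteq> verts G" using S(1) verts_eq unfolding partial_tds_def by auto
    have "r \<in> S" using S(1) unfolding partial_tds_def by simp
    then show "\<forall>x\<in>verts G. \<exists>y\<in>insert w S. adj G x y"
      using S(1) verts_eq adj_middle adj_pendant adj_commute[of G r w]
      unfolding partial_tds_def dominates_def by auto
  qed
  then show ?thesis
    by (rule gamma_t_eqI[OF finite_verts]) (use card card_tds_lower in auto)
qed

end

section \<open>Two pieces joined by an edge or by a path of length two\<close>

locale glued_by_edge = P1: attached_piece K W1 r1 + P2: attached_piece K W2 r2
  for K :: "'b graph" and W1 r1 W2 r2 +
  assumes pieces_disjoint: "W1 \<inter> W2 = {}"
    and verts_eq: "verts K = W1 \<union> W2"
    and adj_roots: "adj K r1 r2"
    and adj_root1: "\<forall>y. adj K r1 y \<longrightarrow> y \<in> W1 \<or> y = r2"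
    and adj_root2: "\<forall>y. adj K r2 y \<longrightarrow> y \<in> W2 \<or> y = r1"
begin

lemma swap: "glued_by_edge K W2 r2 W1 r1"
proof (rule glued_by_edge.intro)
  show "attached_piece K W2 r2" "attached_piece K W1 r1"
    by (intro attached_piece.intro P1.rooted_piece_axioms P2.rooted_piece_axioms
        P1.attached_piece_axioms P2.attached_piece_axioms)+
  show "glued_by_edge_axioms K W2 r2 W1 r1"
    using pieces_disjoint verts_eq adj_roots adj_root1 adj_root2 adj_commute[of K r1 r2]
    unfolding glued_by_edge_axioms_def by blast
qed

lemma finite_verts: "finite (verts K)"
  using verts_eq P1.finite_piece P2.finite_piece by simp

lemma restrict_tds:
  assumes S: "total_dominating K S"
  shows "partial_tds K W1 r1 (r1 \<in> S) (r2 \<notin> S) (S \<inter> W1)"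
proof -
  have dom: "dominates K (S \<inter> W1) {r1}" if "r2 \<notin> S"
  proof -
    obtain s where "s \<in> S" "adj K r1 s"
      using S P1.root_in verts_eq unfolding total_dominating_def by blast
    then show ?thesis using adj_root1 that unfolding dominates_def by blast
  qed
  show ?thesis
    by (rule partial_tds_weaken[OF P1.partial_tds_restrict[OF S]]) (use dom in auto)
qed

lemma card_tds_split:
  assumes "total_dominating K S"
  shows "card S = card (S \<inter> W1) + card (S \<inter> W2)"
proof -
  have "S = (S \<inter> W1) \<union> (S \<inter> W2)"
    using assms verts_eq unfolding total_dominating_def by blast
  moreover have "finite (S \<inter> W1)" "finite (S \<inter> W2)"
    using P1.finite_piece P2.finite_piece by simp_all
  ultimately show ?thesis
    using pieces_disjoint by (metis card_Un_disjoint Int_assoc Int_commute Int_empty_right)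
qed

lemma tds_of_pieces:
  assumes S1: "partial_tds K W1 r1 i1 d1 S1" and S2: "partial_tds K W2 r2 i2 d2 S2"
    and "d1 \<or> i2" and "d2 \<or> i1"
  shows "total_dominating K (S1 \<union> S2)"
  unfolding total_dominating_def
proof
  show "S1 \<union> S2 \<subseteq> verts K" using S1 S2 verts_eq unfolding partial_tds_def by blast
  show "\<forall>x\<in>verts K. \<exists>s\<in>S1 \<union> S2. adj K x s"
  proof
    fix x assume "x \<in> verts K"
    then consider "x \<in> W1 - {r1}" | "x \<in> W2 - {r2}" | "x = r1" | "x = r2"
      using verts_eq by blast
    then show "\<exists>s\<in>S1 \<union> S2. adj K x s"
    proof cases
      case 3
      then show ?thesis using S1 S2 assms(3) adj_roots unfolding partial_tds_def dominates_def by blast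
    next
      case 4
      then show ?thesis using S1 S2 assms(4) adj_roots adj_commute[of K r1 r2]
        unfolding partial_tds_def dominates_def by blast
    qed (use S1 S2 in \<open>auto simp: partial_tds_def dominates_def\<close>)
  qed
qed

lemma gamma_t_le_sum:
  assumes "d1 \<or> i2" and "d2 \<or> i1"
  shows "gamma_t K \<le> gamma_partial K W1 r1 i1 d1 + gamma_partial K W2 r2 i2 d2"
proof -
  obtain S1 where S1: "partial_tds K W1 r1 i1 d1 S1" "card S1 = gamma_partial K W1 r1 i1 d1"
    using P1.gamma_partial_witness by blast
  obtain S2 where S2: "partial_tds K W2 r2 i2 d2 S2" "card S2 = gamma_partial K W2 r2 i2 d2"
    using P2.gamma_partial_witness by blast
  have "gamma_t K \<le> card (S1 \<union> S2)"
    using gamma_t_le[OF finite_verts tds_of_pieces[OF S1(1) S2(1) assms]] .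
  also have "\<dots> \<le> card S1 + card S2" by (rule card_Un_le)
  finally show ?thesis using S1(2) S2(2) by simp
qed

lemma card_tds_lower:
  assumes S: "total_dominating K S"
  shows "min (min (P1.pB + P2.pB) (P1.pA + P2.pD)) (min (P1.pD + P2.pA) (P1.pC + P2.pC)) \<le> card S"
proof -
  have "gamma_partial K W1 r1 (r1 \<in> S) (r2 \<notin> S) \<le> card (S \<inter> W1)"
    using P1.gamma_partial_le_card[OF restrict_tds[OF S]] .
  moreover have "gamma_partial K W2 r2 (r2 \<in> S) (r1 \<notin> S) \<le> card (S \<inter> W2)"
    using P2.gamma_partial_le_card[OF glued_by_edge.restrict_tds[OF swap S]] .
  ultimately show ?thesis
    using card_tds_split[OF S] by (cases "r1 \<in> S"; cases "r2 \<in> S") auto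
qed

theorem gamma_t_eq:
  "gamma_t K = min (min (P1.pB + P2.pB) (P1.pA + P2.pD)) (min (P1.pD + P2.pA) (P1.pC + P2.pC))"
proof (rule antisym)
  show "gamma_t K \<le> min (min (P1.pB + P2.pB) (P1.pA + P2.pD)) (min (P1.pD + P2.pA) (P1.pC + P2.pC))"
    using gamma_t_le_sum[of False True False True] gamma_t_le_sum[of True False False True]
      gamma_t_le_sum[of False True True False] gamma_t_le_sum[of True False True False]
    by simp
  have "total_dominating K (W1 \<union> W2)"
    using tds_of_pieces[OF P1.partial_tds_whole P2.partial_tds_whole, of True True True True] by simp
  then obtain S where "total_dominating K S" "card S = gamma_t K"
    using gamma_t_attained[OF finite_verts] by blast
  then show "min (min (P1.pB + P2.pB) (P1.pA + P2.pD)) (min (P1.pD + P2.pA) (P1.pC + P2.pC)) \<le> gamma_t K"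
    using card_tds_lower by metis
qed

end

locale glued_by_path = P1: attached_piece K W1 r1 + P2: attached_piece K W2 r2
  for K :: "'b graph" and W1 r1 W2 r2 +
  fixes z :: 'b
  assumes pieces_disjoint: "W1 \<inter> W2 = {}" and middle_notin1: "z \<notin> W1" and middle_notin2: "z \<notin> W2"
    and verts_eq: "verts K = insert z (W1 \<union> W2)"
    and adj_middle: "\<forall>y. adj K z y \<longleftrightarrow> (y = r1 \<or> y = r2)"
    and adj_root1: "\<forall>y. adj K r1 y \<longrightarrow> y \<in> W1 \<or> y = z"
    and adj_root2: "\<forall>y. adj K r2 y \<longrightarrow> y \<in> W2 \<or> y = z"
begin

lemma swap: "glued_by_path K W2 r2 W1 r1 z"
proof (rule glued_by_path.intro)
  show "attached_piece K W2 r2" "attached_piece K W1 r1"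
    by (intro attached_piece.intro P1.rooted_piece_axioms P2.rooted_piece_axioms
        P1.attached_piece_axioms P2.attached_piece_axioms)+
  show "glued_by_path_axioms K W2 r2 W1 r1 z"
    using pieces_disjoint middle_notin1 middle_notin2 verts_eq adj_middle adj_root1 adj_root2
    unfolding glued_by_path_axioms_def by blast
qed

lemma finite_verts: "finite (verts K)"
  using verts_eq P1.finite_piece P2.finite_piece by simp

lemma restrict_tds:
  assumes S: "total_dominating K S"
  shows "partial_tds K W1 r1 (r1 \<in> S) (z \<notin> S) (S \<inter> W1)"
proof -
  have dom: "dominates K (S \<inter> W1) {r1}" if "z \<notin> S"
  proof -
    obtain s where "s \<in> S" "adj K r1 s"
      using S P1.root_in verts_eq unfolding total_dominating_def by blast
    then show ?thesis using adj_root1 that unfolding dominates_def by blast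
  qed
  show ?thesis
    by (rule partial_tds_weaken[OF P1.partial_tds_restrict[OF S]]) (use dom in auto)
qed

lemma card_tds_split:
  assumes "total_dominating K S"
  shows "card S = card (S \<inter> W1) + card (S \<inter> W2) + (if z \<in> S then 1 else 0)"
proof -
  have "S = (S \<inter> W1) \<union> (S \<inter> W2) \<union> (S \<inter> {z})"
    using assms verts_eq unfolding total_dominating_def by blast
  moreover have "finite (S \<inter> W1)" "finite (S \<inter> W2)"
    using P1.finite_piece P2.finite_piece by simp_all
  moreover have "(S \<inter> W1) \<inter> (S \<inter> W2) = {}" "((S \<inter> W1) \<union> (S \<inter> W2)) \<inter> (S \<inter> {z}) = {}"
    using pieces_disjoint middle_notin1 middle_notin2 by blast+
  ultimately have "card S = card (S \<inter> W1) + card (S \<inter> W2) + card (S \<inter> {z})"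
    by (metis card_Un_disjoint finite_Int finite_UnI finite.emptyI finite_insert)
  then show ?thesis by (simp add: Int_insert_right)
qed

lemma tds_of_pieces:
  assumes S1: "partial_tds K W1 r1 i1 d1 S1" and S2: "partial_tds K W2 r2 i2 d2 S2"
    and "i1 \<or> i2" and "d1 \<or> c" and "d2 \<or> c"
  shows "total_dominating K (S1 \<union> S2 \<union> (if c then {z} else {}))"
  unfolding total_dominating_def
proof
  show "S1 \<union> S2 \<union> (if c then {z} else {}) \<subseteq> verts K"
    using S1 S2 verts_eq unfolding partial_tds_def by auto
  show "\<forall>x\<in>verts K. \<exists>s\<in>S1 \<union> S2 \<union> (if c then {z} else {}). adj K x s"
  proof
    fix x assume "x \<in> verts K"
    then consider "x \<in> W1 - {r1}" | "x \<in> W2 - {r2}" | "x = r1" | "x = r2" | "x = z"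
      using verts_eq by blast
    then show "\<exists>s\<in>S1 \<union> S2 \<union> (if c then {z} else {}). adj K x s"
    proof cases
      case 3
      then show ?thesis using S1 assms(4) adj_middle adj_commute[of K r1 z]
        unfolding partial_tds_def dominates_def by auto
    next
      case 4
      then show ?thesis using S2 assms(5) adj_middle adj_commute[of K r2 z]
        unfolding partial_tds_def dominates_def by auto
    next
      case 5
      then show ?thesis using S1 S2 assms(3) adj_middle unfolding partial_tds_def by auto
    qed (use S1 S2 in \<open>auto simp: partial_tds_def dominates_def\<close>)
  qed
qed

lemma gamma_t_le_sum:
  assumes "i1 \<or> i2" and "d1 \<or> c" and "d2 \<or> c"
  shows "gamma_t K \<le> gamma_partial K W1 r1 i1 d1 + gamma_partial K W2 r2 i2 d2 + (if c then 1 else 0)"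
proof -
  obtain S1 where S1: "partial_tds K W1 r1 i1 d1 S1" "card S1 = gamma_partial K W1 r1 i1 d1"
    using P1.gamma_partial_witness by blast
  obtain S2 where S2: "partial_tds K W2 r2 i2 d2 S2" "card S2 = gamma_partial K W2 r2 i2 d2"
    using P2.gamma_partial_witness by blast
  let ?Z = "if c then {z} else {}"
  have "gamma_t K \<le> card (S1 \<union> S2 \<union> ?Z)"
    by (rule gamma_t_le[OF finite_verts tds_of_pieces[OF S1(1) S2(1) assms]])
  also have "\<dots> \<le> card S1 + card S2 + card ?Z"
    by (meson card_Un_le add_le_mono1 order_trans)
  finally show ?thesis using S1(2) S2(2) by (simp split: if_splits)
qed

lemma card_tds_lower:
  assumes S: "total_dominating K S"
  shows "min (min (P1.pA + P2.pC) (P1.pC + P2.pA)) (min (P1.pB + P2.pD + 1) (P1.pD + P2.pB + 1))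
    \<le> card S"
proof -
  have r12: "r1 \<in> S \<or> r2 \<in> S"
    using S verts_eq adj_middle unfolding total_dominating_def by auto
  have v1: "partial_tds K W1 r1 (r1 \<in> S) (z \<notin> S) (S \<inter> W1)" by (rule restrict_tds[OF S])
  have v2: "partial_tds K W2 r2 (r2 \<in> S) (z \<notin> S) (S \<inter> W2)"
    by (rule glued_by_path.restrict_tds[OF swap S])
  consider "z \<in> S" "r1 \<in> S" | "z \<in> S" "r2 \<in> S" | "z \<notin> S" "r1 \<in> S" | "z \<notin> S" "r2 \<in> S"
    using r12 by blast
  then show ?thesis
  proof cases
    case 1
    then have "P1.pB \<le> card (S \<inter> W1)" "P2.pD \<le> card (S \<inter> W2)"
      by (auto intro!: P1.gamma_partial_le_card_weaken[OF v1] P2.gamma_partial_le_card_weaken[OF v2])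
    then show ?thesis using card_tds_split[OF S] 1 by simp
  next
    case 2
    then have "P1.pD \<le> card (S \<inter> W1)" "P2.pB \<le> card (S \<inter> W2)"
      by (auto intro!: P1.gamma_partial_le_card_weaken[OF v1] P2.gamma_partial_le_card_weaken[OF v2])
    then show ?thesis using card_tds_split[OF S] 2 by simp
  next
    case 3
    then have "P1.pA \<le> card (S \<inter> W1)" "P2.pC \<le> card (S \<inter> W2)"
      by (auto intro!: P1.gamma_partial_le_card_weaken[OF v1] P2.gamma_partial_le_card_weaken[OF v2])
    then show ?thesis using card_tds_split[OF S] 3 by simp
  next
    case 4
    then have "P1.pC \<le> card (S \<inter> W1)" "P2.pA \<le> card (S \<inter> W2)"
      by (auto intro!: P1.gamma_partial_le_card_weaken[OF v1] P2.gamma_partial_le_card_weaken[OF v2])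
    then show ?thesis using card_tds_split[OF S] 4 by simp
  qed
qed

theorem gamma_t_eq:
  "gamma_t K = min (min (P1.pA + P2.pC) (P1.pC + P2.pA)) (min (P1.pB + P2.pD + 1) (P1.pD + P2.pB + 1))"
proof (rule antisym)
  show "gamma_t K \<le> min (min (P1.pA + P2.pC) (P1.pC + P2.pA)) (min (P1.pB + P2.pD + 1) (P1.pD + P2.pB + 1))"
    using gamma_t_le_sum[of True False True False True] gamma_t_le_sum[of False True True False True]
      gamma_t_le_sum[of True False False True False] gamma_t_le_sum[of False True False True False]
    by simp
  have "total_dominating K (W1 \<union> W2)"
    using tds_of_pieces[OF P1.partial_tds_whole[of True True] P2.partial_tds_whole[of True True],
        where c = False] by simp
  then obtain S where "total_dominating K S" "card S = gamma_t K"
    using gamma_t_attained[OF finite_verts] by blast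
  then show "min (min (P1.pA + P2.pC) (P1.pC + P2.pA)) (min (P1.pB + P2.pD + 1) (P1.pD + P2.pB + 1))
      \<le> gamma_t K"
    using card_tds_lower by metis
qed

end

lemma exists_parent:
  fixes R :: "('a \<times> 'a) set"
  assumes "(r, x) \<in> R\<^sup>*" and "x \<noteq> r"
  shows "\<exists>p. (p, x) \<in> R \<and> (LEAST n. (r, p) \<in> R ^^ n) < (LEAST n. (r, x) \<in> R ^^ n)"
proof -
  let ?dist = "\<lambda>x. LEAST n. (r, x) \<in> R ^^ n"
  have "\<exists>n. (r, x) \<in> R ^^ n" using assms(1) by (simp add: rtrancl_power)
  then have d: "(r, x) \<in> R ^^ ?dist x" by (rule LeastI_ex)
  then obtain m where m: "?dist x = Suc m"
    using assms(2) by (cases "?dist x") auto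
  then obtain p where p: "(r, p) \<in> R ^^ m" "(p, x) \<in> R"
    using d by (auto elim: relpow_Suc_E)
  moreover have "?dist p \<le> m" using p(1) by (rule Least_le)
  ultimately show ?thesis using m by auto
qed

lemma card_verts_le_Suc_card_edges:
  fixes V :: "'a set" and E :: "'a set set"
  assumes finV: "finite V"
    and edges_in: "\<forall>e\<in>E. \<exists>x y. x \<noteq> y \<and> x \<in> V \<and> y \<in> V \<and> e = {x, y}"
    and rV: "r \<in> V"
    and connected: "\<forall>x\<in>V. (r, x) \<in> {(a, b). {a, b} \<in> E}\<^sup>*"
  shows "card V \<le> card E + 1"
proof -
  define R where "R = {(a, b). {a, b} \<in> E}"
  define dist where "dist x = (LEAST n. (r, x) \<in> R ^^ n)" for x
  have finE: "finite E"
    by (rule finite_subset[of E "Pow V"]) (use edges_in finV in auto)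
  have "\<forall>x\<in>V - {r}. \<exists>p. (p, x) \<in> R \<and> dist p < dist x"
  proof
    fix x assume "x \<in> V - {r}"
    then have "(r, x) \<in> R\<^sup>*" "x \<noteq> r" using connected unfolding R_def by auto
    then show "\<exists>p. (p, x) \<in> R \<and> dist p < dist x" unfolding dist_def by (rule exists_parent)
  qed
  then obtain parent where parent: "\<forall>x\<in>V - {r}. (parent x, x) \<in> R \<and> dist (parent x) < dist x"
    by (rule bchoice[elim_format]) blast
  have inj: "inj_on (\<lambda>x. {parent x, x}) (V - {r})"
  proof (rule inj_onI)
    fix x y assume x: "x \<in> V - {r}" and y: "y \<in> V - {r}" and eq: "{parent x, x} = {parent y, y}"
    show "x = y"
    proof (rule ccontr)
      assume "x \<noteq> y"
      then have "parent x = y \<and> parent y = x" using eq by (metis doubleton_eq_iff)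
      moreover have "dist (parent x) < dist x" "dist (parent y) < dist y"
        using parent x y by blast+
      ultimately show False by simp
    qed
  qed
  have "(\<lambda>x. {parent x, x}) ` (V - {r}) \<subseteq> E"
    using parent unfolding R_def by auto
  then have "card (V - {r}) \<le> card E"
    by (rule card_inj_on_le[OF inj _ finE])
  then show ?thesis using rV finV by simp
qed

lemma tree_simple_graph:
  assumes "is_tree T"
  shows "finite (verts T)"
    and "\<forall>e\<in>edges T. \<exists>x y. x \<noteq> y \<and> x \<in> verts T \<and> y \<in> verts T \<and> e = {x, y}"
  using assms unfolding is_tree_def simple_graph_def by auto

lemma tree_edge_ends:
  assumes "is_tree T" "{a, b} \<in> edges T"
  shows "a \<in> verts T" "b \<in> verts T" "a \<noteq> b"
proof -
  obtain x y where "x \<noteq> y" "x \<in> verts T" "y \<in> verts T" "{a, b} = {x, y}"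
    using tree_simple_graph(2)[OF assms(1)] assms(2) by blast
  then show "a \<in> verts T" "b \<in> verts T" "a \<noteq> b" by (metis doubleton_eq_iff)+
qed

lemma tree_finite_edges:
  assumes "is_tree T" shows "finite (edges T)"
  by (rule finite_subset[of _ "Pow (verts T)"])
    (use tree_simple_graph[OF assms] in auto)

lemma tree_connected:
  assumes "is_tree T" "x \<in> verts T" "y \<in> verts T"
  shows "(x, y) \<in> {(a, b). {a, b} \<in> edges T}\<^sup>*"
  using assms unfolding is_tree_def connected_graph_def adj_def by blast

lemma tree_minimally_connected:
  assumes T: "is_tree T" and e: "e \<in> edges T" and a: "a \<in> verts T"
    and connected: "\<forall>x\<in>verts T. (a, x) \<in> {(p, q). {p, q} \<in> edges T - {e}}\<^sup>*"
  shows False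
proof -
  have "card (verts T) \<le> card (edges T - {e}) + 1"
    using tree_simple_graph[OF T] a connected by (intro card_verts_le_Suc_card_edges) auto
  moreover have "card (edges T - {e}) = card (edges T) - 1"
    using e tree_finite_edges[OF T] by simp
  moreover have "card (edges T) = card (verts T) - 1" "card (edges T) \<noteq> 0"
    using T e tree_finite_edges[OF T] unfolding is_tree_def by auto
  ultimately show False by simp
qed

text \<open>Otherwise the edge \<open>uy'\<close> could be removed without disconnecting the tree.\<close>

lemma tree_no_detour:
  assumes T: "is_tree T" and e1: "{u, y} \<in> edges T" and e2: "{u, y'} \<in> edges T" and ne: "y \<noteq> y'"
    and path: "(y, y') \<in> {(a, b). {a, b} \<in> edges T \<and> a \<noteq> u \<and> b \<noteq> u}\<^sup>*"
  shows False
proof -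
  define R' where "R' = {(a, b). {a, b} \<in> edges T - {{u, y'}}}"
  have "{(a, b). {a, b} \<in> edges T \<and> a \<noteq> u \<and> b \<noteq> u} \<subseteq> R'"
    unfolding R'_def by (auto simp: doubleton_eq_iff)
  then have yy': "(y, y') \<in> R'\<^sup>*" using rtrancl_mono path by blast
  have uy: "(u, y) \<in> R'" unfolding R'_def using e1 ne by (auto simp: doubleton_eq_iff)
  have "(u, x) \<in> R'\<^sup>*" if "x \<in> verts T" for x
  proof -
    have "(u, x) \<in> {(a, b). {a, b} \<in> edges T}\<^sup>*"
      using tree_connected[OF T _ that] tree_edge_ends[OF T e1] by blast
    then show ?thesis
    proof (induction rule: rtrancl_induct)
      case (step a b)
      show ?case
      proof (cases "{a, b} = {u, y'}")
        case False
        then have "(a, b) \<in> R'" using step(2) unfolding R'_def by simp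
        then show ?thesis using step(3) by simp
      next
        case True
        then have "(a = u \<and> b = y') \<or> (a = y' \<and> b = u)" by (metis doubleton_eq_iff)
        then show ?thesis using converse_rtrancl_into_rtrancl[OF uy yy'] by auto
      qed
    qed simp
  qed
  then show False
    using tree_minimally_connected[OF T e2] tree_edge_ends[OF T e1] unfolding R'_def by blast
qed

section \<open>Class 3 as a property of subdivisions\<close>

lemma sd_gamma_t_attained:
  assumes "\<exists>F. increases_gamma_t G F"
  shows "\<exists>F. increases_gamma_t G F \<and> card F = sd_gamma_t G"
  unfolding sd_gamma_t_def by (rule LeastI_ex) (use assms in blast)

lemma class3_no_increase:
  assumes "class3 G" and "F \<subseteq> edges G" and "card F \<le> 2"
  shows "gamma_t (subdivide G F) \<le> gamma_t G"
proof (rule ccontr)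
  assume "\<not> gamma_t (subdivide G F) \<le> gamma_t G"
  then have "increases_gamma_t G F" using assms(2) unfolding increases_gamma_t_def by simp
  then have "sd_gamma_t G \<le> card F" unfolding sd_gamma_t_def by (intro Least_le) blast
  then show False using assms unfolding class3_def by simp
qed

lemma class3_increasing_triple:
  assumes "class3 G"
  shows "\<exists>F \<subseteq> edges G. card F = 3 \<and> gamma_t G < gamma_t (subdivide G F)"
proof -
  obtain F where "increases_gamma_t G F" "card F = sd_gamma_t G"
    using assms sd_gamma_t_attained unfolding class3_def by blast
  then show ?thesis using assms unfolding class3_def increases_gamma_t_def by auto
qed

lemma class3I:
  assumes "\<exists>F \<subseteq> edges G. card F = 3 \<and> gamma_t G < gamma_t (subdivide G F)"
    and "\<And>F. F \<subseteq> edges G \<Longrightarrow> card F \<le> 2 \<Longrightarrow> gamma_t (subdivide G F) \<le> gamma_t G"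
  shows "class3 G"
proof -
  have lower: "3 \<le> card F" if "increases_gamma_t G F" for F
  proof (rule ccontr)
    assume "\<not> 3 \<le> card F"
    then have "card F \<le> 2" by simp
    moreover have F: "F \<subseteq> edges G" "gamma_t G < gamma_t (subdivide G F)"
      using that unfolding increases_gamma_t_def by auto
    ultimately show False using assms(2) by (meson leD)
  qed
  have three: "\<exists>F. increases_gamma_t G F \<and> card F = 3"
    using assms(1) unfolding increases_gamma_t_def by blast
  have "sd_gamma_t G = 3"
    unfolding sd_gamma_t_def by (rule Least_equality) (use lower three in auto)
  then show ?thesis using three unfolding class3_def by blast
qed

lemma class3_tree_card_verts:
  assumes "is_tree T" and "class3 T"
  shows "4 \<le> card (verts T)"
proof -
  obtain F where F: "F \<subseteq> edges T" "card F = 3"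
    using class3_increasing_triple[OF assms(2)] by blast
  have "card F \<le> card (edges T)"
    by (rule card_mono[OF tree_finite_edges[OF assms(1)] F(1)])
  then have "3 \<le> card (edges T)" using F(2) by simp
  moreover have "card (edges T) = card (verts T) - 1"
    using assms(1) unfolding is_tree_def by blast
  ultimately show ?thesis by linarith
qed

section \<open>A tree cut at a leaf edge\<close>

locale tree_with_leaf =
  fixes T :: "'a graph" and u u' :: 'a
  assumes tree: "is_tree T" and leaf: "is_leaf T u'" and leaf_adj: "adj T u u'"
    and three_verts: "3 \<le> card (verts T)"
begin

definition piece :: "'a set set \<Rightarrow> ('a + 'a set) set" where
  "piece F = Inl ` (verts T - {u'}) \<union> Inr ` F"

definition leafless_edges :: "'a set set" where
  "leafless_edges = {e \<in> edges T. u' \<notin> e}"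

lemma leaf_edge: "{u, u'} \<in> edges T"
  using leaf_adj unfolding adj_def .

lemma leaf_edge_ends: "u \<in> verts T" "u' \<in> verts T" "u \<noteq> u'"
  using tree_edge_ends[OF tree leaf_edge] by simp_all

lemma finite_verts: "finite (verts T)"
  using tree_simple_graph(1)[OF tree] .

lemma finite_edges: "finite (edges T)"
  using tree_finite_edges[OF tree] .

lemma edge_ends_verts: "{a, b} \<in> edges T \<Longrightarrow> a \<in> verts T \<and> b \<in> verts T"
  using tree_edge_ends[OF tree] by blast

lemma leaf_nbr: "adj T u' y \<Longrightarrow> y = u"
proof -
  assume a: "adj T u' y"
  have "card {z \<in> verts T. adj T u' z} = 1"
    using leaf unfolding is_leaf_def degree_def by simp
  then obtain z where z: "{z \<in> verts T. adj T u' z} = {z}"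
    by (rule card_1_singletonE)
  have "u \<in> {z \<in> verts T. adj T u' z}"
    using leaf_edge_ends leaf_adj adj_commute[of T u u'] by simp
  moreover have "y \<in> {z \<in> verts T. adj T u' z}"
    using a edge_ends_verts unfolding adj_def by simp
  ultimately show "y = u" unfolding z by simp
qed

lemma edge_at_leaf: "e \<in> edges T \<Longrightarrow> u' \<in> e \<Longrightarrow> e = {u, u'}"
  using tree_simple_graph(2)[OF tree] leaf_nbr unfolding adj_def
  by (metis insert_commute insertE singletonD)

lemma edge_avoids_leaf: "{a, b} \<in> edges T \<Longrightarrow> a \<noteq> u \<Longrightarrow> b \<noteq> u'"
  using leaf_nbr unfolding adj_def by (metis insert_commute)

lemma leaf_edge_not_leafless: "{u, u'} \<notin> leafless_edges"
  unfolding leafless_edges_def by simp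

lemma leafless_edges_subset: "leafless_edges \<subseteq> edges T"
  unfolding leafless_edges_def by blast

lemma finite_leafless: "F \<subseteq> leafless_edges \<Longrightarrow> finite F"
  using finite_subset[OF _ finite_edges] leafless_edges_subset by blast

lemma edges_split_leaf_edge: "edges T = insert {u, u'} leafless_edges"
  using leaf_edge edge_at_leaf unfolding leafless_edges_def by blast

lemma leafless_edge_ends:
  "e \<in> leafless_edges \<Longrightarrow> \<exists>a b. a \<noteq> b \<and> a \<in> verts T \<and> b \<in> verts T \<and> a \<noteq> u' \<and> b \<noteq> u' \<and> e = {a, b}"
  using tree_simple_graph(2)[OF tree] unfolding leafless_edges_def by fastforce

lemma leafless_edge_end: "e \<in> leafless_edges \<Longrightarrow> a \<in> e \<Longrightarrow> a \<in> verts T \<and> a \<noteq> u'"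
  using leafless_edge_ends by blast

lemma piece_Inl [simp]: "Inl a \<in> piece F \<longleftrightarrow> a \<in> verts T \<and> a \<noteq> u'"
  unfolding piece_def by blast

lemma piece_Inr [simp]: "Inr e \<in> piece F \<longleftrightarrow> e \<in> F"
  unfolding piece_def by blast

lemma finite_piece: "finite F \<Longrightarrow> finite (piece F)"
  unfolding piece_def using finite_verts by simp

lemma root_has_inner_nbr: "\<exists>y. adj T u y \<and> y \<noteq> u'"
proof -
  have "card (verts T - {u, u'}) \<noteq> 0"
    using leaf_edge_ends finite_verts three_verts by (simp add: card_Diff_subset)
  then obtain x where x: "x \<in> verts T - {u, u'}" by (metis card.empty ex_in_conv)
  have "(u, x) \<in> {(a, b). adj T a b}\<^sup>*"
    using tree x leaf_edge_ends unfolding is_tree_def connected_graph_def by blast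
  then have "(\<exists>y. adj T u y \<and> y \<noteq> u') \<or> x \<in> {u, u'}"
  proof (induction rule: rtrancl_induct)
    case (step a b)
    then show ?case using leaf_nbr by blast
  qed simp
  then show ?thesis using x by blast
qed

lemma vertex_has_edge: "a \<in> verts T \<Longrightarrow> \<exists>b. {a, b} \<in> edges T \<and> b \<noteq> u'"
proof (cases "a = u")
  case True
  then show ?thesis using root_has_inner_nbr unfolding adj_def by blast
next
  case False
  assume a: "a \<in> verts T"
  have "(a, u) \<in> {(x, y). {x, y} \<in> edges T}\<^sup>*"
    using tree_connected[OF tree a leaf_edge_ends(1)] .
  then obtain b where "{a, b} \<in> edges T"
    using False by (cases rule: converse_rtranclE) auto
  then show ?thesis using edge_avoids_leaf False by blast
qed

lemma adj_piece_closed: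
  assumes F: "F \<subseteq> leafless_edges" and F': "F' - {{u, u'}} \<subseteq> F"
    and x: "x \<in> piece F" and xu: "x \<noteq> Inl u" and a: "adj (subdivide T F') x y"
  shows "y \<in> piece F"
proof (cases x)
  case (Inl p)
  then have p: "p \<in> verts T" "p \<noteq> u'" "p \<noteq> u" using x xu by auto
  show ?thesis
  proof (cases y)
    case (Inl q)
    then have "{p, q} \<in> edges T" using a \<open>x = Inl p\<close> by (simp add: adj_subdivide)
    then show ?thesis using Inl edge_ends_verts edge_avoids_leaf p by auto
  next
    case (Inr e)
    then have "e \<in> F'" "p \<in> e" using a \<open>x = Inl p\<close> by (simp_all add: adj_subdivide)
    then have "e \<in> F" using F' p by auto
    then show ?thesis using Inr by simp
  qed
next
  case (Inr e)
  then have "e \<in> leafless_edges" using x F by auto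
  then show ?thesis
    using a Inr leafless_edge_end by (cases y) (auto simp: adj_subdivide)
qed

lemma adj_subdivide_leaf_vertex:
  assumes F: "F \<subseteq> leafless_edges"
  shows "adj (subdivide T F) (Inl u') y \<longleftrightarrow> y = Inl u"
proof (cases y)
  case (Inl q)
  have "{u', q} \<in> edges T - F \<longleftrightarrow> q = u"
    using leaf_nbr leaf_edge leaf_edge_not_leafless F unfolding adj_def
    by (auto simp: insert_commute)
  then show ?thesis using Inl by (simp add: adj_subdivide)
next
  case (Inr e)
  then show ?thesis using leafless_edge_end F by (auto simp: adj_subdivide)
qed

lemma piece_no_isolated:
  assumes F: "F \<subseteq> leafless_edges" and x: "x \<in> piece F"
  shows "\<exists>y\<in>piece F. adj (subdivide T F) x y"
proof (cases x)
  case (Inl a)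
  then have a: "a \<in> verts T" "a \<noteq> u'" using x by auto
  obtain b where b: "{a, b} \<in> edges T" "b \<noteq> u'" using vertex_has_edge a by blast
  show ?thesis
  proof (cases "{a, b} \<in> F")
    case True
    then show ?thesis using Inl by (intro bexI[of _ "Inr {a, b}"]) (auto simp: adj_subdivide)
  next
    case False
    then show ?thesis using Inl b edge_ends_verts by (intro bexI[of _ "Inl b"]) (auto simp: adj_subdivide)
  qed
next
  case (Inr e)
  then have e: "e \<in> F" using x by simp
  obtain a b where ab: "a \<in> verts T" "a \<noteq> u'" "e = {a, b}"
    using leafless_edge_ends F e by blast
  then show ?thesis using Inr e by (intro bexI[of _ "Inl a"]) (auto simp: adj_subdivide)
qed

lemma rooted_piece_subdivide: "F \<subseteq> leafless_edges \<Longrightarrow> rooted_piece (subdivide T F) (piece F) (Inl u)"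
  using finite_piece finite_leafless leaf_edge_ends piece_no_isolated
  by (intro rooted_piece.intro) auto

lemma pendant_piece_subdivide:
  assumes F: "F \<subseteq> leafless_edges"
  shows "pendant_piece (subdivide T F) (piece F) (Inl u) (Inl u')"
proof (intro pendant_piece.intro attached_piece.intro attached_piece_axioms.intro
    pendant_piece_axioms.intro rooted_piece_subdivide[OF F])
  show "verts (subdivide T F) = insert (Inl u') (piece F)"
    unfolding verts_subdivide piece_def using leaf_edge_ends(2) by auto
  then show "piece F \<subseteq> verts (subdivide T F)" by blast
  show "\<forall>x\<in>piece F - {Inl u}. \<forall>y. adj (subdivide T F) x y \<longrightarrow> y \<in> piece F"
    using adj_piece_closed[OF F] by blast
  show "\<forall>y. adj (subdivide T F) (Inl u') y = (y = Inl u)"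
    using adj_subdivide_leaf_vertex[OF F] by simp
qed simp

abbreviation "subdivide_leaf F \<equiv> subdivide T (insert {u, u'} F)"

lemma adj_subdivide_leaf_eq:
  assumes F: "F \<subseteq> leafless_edges" and x: "x \<in> piece F" and y: "y \<in> piece F"
  shows "adj (subdivide_leaf F) x y = adj (subdivide T F) x y"
proof (cases x; cases y)
  fix a b assume "x = Inl a" "y = Inl b"
  moreover have "{a, b} \<noteq> {u, u'}" using x y \<open>x = Inl a\<close> \<open>y = Inl b\<close> by (auto simp: doubleton_eq_iff)
  ultimately show ?thesis by (simp add: adj_subdivide)
qed (use x y in \<open>auto simp: adj_subdivide\<close>)

lemma pendant_path_piece_subdivide_leaf:
  assumes F: "F \<subseteq> leafless_edges"
  shows "pendant_path_piece (subdivide_leaf F) (piece F) (Inl u) (Inr {u, u'}) (Inl u')"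
proof (intro pendant_path_piece.intro attached_piece.intro attached_piece_axioms.intro
    pendant_path_piece_axioms.intro)
  show "rooted_piece (subdivide_leaf F) (piece F) (Inl u)"
    using rooted_piece_cong[OF rooted_piece_subdivide[OF F]] adj_subdivide_leaf_eq[OF F] by blast
  show "verts (subdivide_leaf F) = insert (Inr {u, u'}) (insert (Inl u') (piece F))"
    unfolding verts_subdivide piece_def using leaf_edge_ends(2) by auto
  then show "piece F \<subseteq> verts (subdivide_leaf F)" by blast
  show "\<forall>x\<in>piece F - {Inl u}. \<forall>y. adj (subdivide_leaf F) x y \<longrightarrow> y \<in> piece F"
    using adj_piece_closed[OF F] by blast
  show "\<forall>y. adj (subdivide_leaf F) (Inl u') y = (y = Inr {u, u'})"
  proof
    fix y show "adj (subdivide_leaf F) (Inl u') y = (y = Inr {u, u'})"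
      using edge_at_leaf leafless_edge_end F by (cases y) (auto simp: adj_subdivide)
  qed
  show "\<forall>y. adj (subdivide_leaf F) (Inr {u, u'}) y = (y = Inl u \<or> y = Inl u')"
  proof
    fix y show "adj (subdivide_leaf F) (Inr {u, u'}) y = (y = Inl u \<or> y = Inl u')"
      by (cases y) (auto simp: adj_subdivide)
  qed
  show "Inr {u, u'} \<notin> piece F" using F leaf_edge_not_leafless by auto
qed simp_all

definition PA where "PA F = gamma_partial (subdivide T F) (piece F) (Inl u) True True"
definition PB where "PB F = gamma_partial (subdivide T F) (piece F) (Inl u) True False"
definition PC where "PC F = gamma_partial (subdivide T F) (piece F) (Inl u) False True"
definition PD where "PD F = gamma_partial (subdivide T F) (piece F) (Inl u) False False"

lemma gamma_t_subdivide: "F \<subseteq> leafless_edges \<Longrightarrow> gamma_t (subdivide T F) = PA F"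
  unfolding PA_def using pendant_piece.gamma_t_eq[OF pendant_piece_subdivide] by blast

lemma gamma_t_subdivide_leaf:
  assumes F: "F \<subseteq> leafless_edges"
  shows "gamma_t (subdivide_leaf F) = PB F + 1"
proof -
  have "gamma_partial (subdivide_leaf F) (piece F) (Inl u) True False = PB F"
    unfolding PB_def using leaf_edge_ends
    by (intro gamma_partial_cong) (simp_all add: adj_subdivide_leaf_eq[OF F])
  then show ?thesis
    using pendant_path_piece.gamma_t_eq[OF pendant_path_piece_subdivide_leaf[OF F]] by simp
qed

lemma gamma_t_eq_PA: "gamma_t T = PA {}"
  using gamma_t_subdivide_empty[of T] gamma_t_subdivide[of "{}"] by simp

lemma parameter_bounds:
  assumes F: "F \<subseteq> leafless_edges"
  shows "PA F \<le> PB F + 1" "PB F \<le> PD F + 1" "PA F \<le> PC F + 1" "PB F \<le> PA F"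
    "PD F \<le> PC F" "PD F \<le> PB F" "1 \<le> PB F" "PC F \<le> PA F"
proof -
  interpret R: rooted_piece "subdivide T F" "piece F" "Inl u" using rooted_piece_subdivide[OF F] .
  show "PA F \<le> PB F + 1" unfolding PA_def PB_def by (rule R.pA_le_Suc_pB)
  show "PB F \<le> PD F + 1" unfolding PB_def PD_def by (rule R.pB_le_Suc_pD)
  show "PA F \<le> PC F + 1" unfolding PA_def PC_def by (rule R.pA_le_Suc_pC)
  show "1 \<le> PB F" unfolding PB_def by (rule R.pB_pos)
  show "PB F \<le> PA F" "PD F \<le> PC F" "PD F \<le> PB F" "PC F \<le> PA F"
    unfolding PA_def PB_def PC_def PD_def by (rule R.gamma_partial_mono; simp)+
qed

end

section \<open>The branches at the root\<close>

context tree_with_leaf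
begin

definition off_root :: "('a \<times> 'a) set" where
  "off_root = {(a, b). {a, b} \<in> edges T \<and> a \<noteq> u \<and> b \<noteq> u}"

definition inner_nbrs :: "'a set" where
  "inner_nbrs = {y. {u, y} \<in> edges T \<and> y \<noteq> u'}"

definition branch :: "'a \<Rightarrow> 'a set" where
  "branch y = {x. (y, x) \<in> off_root\<^sup>*}"

lemma off_root_rtrancl_sym: "(a, b) \<in> off_root\<^sup>* \<Longrightarrow> (b, a) \<in> off_root\<^sup>*"
proof (induction rule: rtrancl_induct)
  case (step b c)
  then have "(c, b) \<in> off_root" unfolding off_root_def by (simp add: insert_commute)
  then show ?case using step(3) by (rule converse_rtrancl_into_rtrancl)
qed simp

lemma inner_nbrs_verts: "y \<in> inner_nbrs \<Longrightarrow> y \<in> verts T \<and> y \<noteq> u \<and> y \<noteq> u'"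
  unfolding inner_nbrs_def using tree_edge_ends[OF tree, of u y] by auto

lemma finite_inner_nbrs: "finite inner_nbrs"
  using finite_subset[OF _ finite_verts] inner_nbrs_verts by blast

lemma branch_verts: "y \<in> inner_nbrs \<Longrightarrow> x \<in> branch y \<Longrightarrow> x \<in> verts T \<and> x \<noteq> u \<and> x \<noteq> u'"
  unfolding branch_def
proof -
  assume y: "y \<in> inner_nbrs" and "x \<in> {x. (y, x) \<in> off_root\<^sup>*}"
  then have "(y, x) \<in> off_root\<^sup>*" by simp
  then show ?thesis
  proof (induction rule: rtrancl_induct)
    case (step a b)
    then show ?case using edge_ends_verts edge_avoids_leaf unfolding off_root_def by auto
  qed (use inner_nbrs_verts[OF y] in simp)
qed

lemma branch_closed:
  assumes "y \<in> inner_nbrs" "x \<in> branch y" "{x, t} \<in> edges T" "t \<noteq> u"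
  shows "t \<in> branch y"
proof -
  have "(x, t) \<in> off_root"
    using branch_verts[OF assms(1,2)] assms(3,4) unfolding off_root_def by simp
  then show ?thesis using assms(2) unfolding branch_def by (simp add: rtrancl_into_rtrancl)
qed

lemma branch_adj_root:
  assumes "y \<in> inner_nbrs" "x \<in> branch y" "{x, u} \<in> edges T"
  shows "x = y"
proof (rule ccontr)
  assume "x \<noteq> y"
  moreover have "{u, y} \<in> edges T" "{u, x} \<in> edges T"
    using assms(1,3) unfolding inner_nbrs_def by (simp_all add: insert_commute)
  moreover have "(y, x) \<in> {(a, b). {a, b} \<in> edges T \<and> a \<noteq> u \<and> b \<noteq> u}\<^sup>*"
    using assms(2) unfolding branch_def off_root_def by simp
  ultimately show False using tree_no_detour[OF tree] by blast
qed

lemma branches_disjoint: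
  assumes "y \<in> inner_nbrs" "y' \<in> inner_nbrs" "y \<noteq> y'" "x \<in> branch y" "x \<in> branch y'"
  shows False
proof -
  have "(y, y') \<in> off_root\<^sup>*"
    using assms(4,5) off_root_rtrancl_sym unfolding branch_def by (auto intro: rtrancl_trans)
  moreover have "{u, y} \<in> edges T" "{u, y'} \<in> edges T"
    using assms(1,2) unfolding inner_nbrs_def by simp_all
  ultimately show False
    using tree_no_detour[OF tree] assms(3) unfolding off_root_def by blast
qed

lemma branch_cover:
  assumes x: "x \<in> verts T" "x \<noteq> u" "x \<noteq> u'"
  shows "\<exists>y\<in>inner_nbrs. x \<in> branch y"
proof -
  have "(u, x) \<in> {(a, b). {a, b} \<in> edges T}\<^sup>*"
    using tree_connected[OF tree leaf_edge_ends(1) x(1)] .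
  then have "x = u \<or> x = u' \<or> (\<exists>y\<in>inner_nbrs. x \<in> branch y)"
  proof (induction rule: rtrancl_induct)
    case (step a b)
    then have ab: "{a, b} \<in> edges T" by simp
    from step(3) consider "a = u" | "a = u'" | "\<exists>y\<in>inner_nbrs. a \<in> branch y" by blast
    then show ?case
    proof cases
      case 1
      then show ?thesis using ab unfolding inner_nbrs_def branch_def by auto
    next
      case 2
      then show ?thesis using ab leaf_nbr unfolding adj_def by blast
    next
      case 3
      then show ?thesis using ab branch_closed by blast
    qed
  qed simp
  then show ?thesis using x by blast
qed

abbreviation "T0 \<equiv> subdivide T {}"
abbreviation "W0 \<equiv> piece {}"

lemma rooted_piece_unsubdivided: "rooted_piece T0 W0 (Inl u)"
  using rooted_piece_subdivide[of "{}"] by simp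

lemma W0_cases: "x \<in> W0 \<Longrightarrow> \<exists>a. x = Inl a \<and> a \<in> verts T \<and> a \<noteq> u'"
  unfolding piece_def by auto

lemma branch_piece_subset: "y \<in> inner_nbrs \<Longrightarrow> Inl ` branch y \<subseteq> W0 - {Inl u}"
  using branch_verts by auto

lemma branch_piece_closed:
  assumes "y \<in> inner_nbrs"
  shows "\<forall>x\<in>Inl ` branch y. \<forall>t\<in>W0 - {Inl u}. adj T0 x t \<longrightarrow> t \<in> Inl ` branch y"
proof (intro ballI impI)
  fix x t assume x: "x \<in> Inl ` branch y" and t: "t \<in> W0 - {Inl u}" and a: "adj T0 x t"
  obtain p where p: "x = Inl p" "p \<in> branch y" using x by blast
  obtain q where q: "t = Inl q" "q \<noteq> u" using t W0_cases by blast
  have "{p, q} \<in> edges T" using a p(1) q(1) by (simp add: adj_subdivide)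
  then show "t \<in> Inl ` branch y" using branch_closed[OF assms p(2) _ q(2)] q(1) by simp
qed

lemma branch_piece_nbr:
  assumes "y \<in> inner_nbrs" "t \<in> W0" "t \<noteq> Inl u" "adj T0 (Inl y) t"
  shows "t \<in> Inl ` branch y"
proof -
  have "Inl y \<in> Inl ` branch y" unfolding branch_def by simp
  with branch_piece_closed[OF assms(1)]
  have "\<forall>t\<in>W0 - {Inl u}. adj T0 (Inl y) t \<longrightarrow> t \<in> Inl ` branch y" by (rule bspec)
  then show ?thesis using assms(2-4) by blast
qed

lemma branch_piece_adj_root:
  assumes "y \<in> inner_nbrs" "x \<in> Inl ` branch y" "adj T0 x (Inl u)"
  shows "x = Inl y"
proof -
  obtain p where p: "x = Inl p" "p \<in> branch y" using assms(2) by blast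
  then have "{p, u} \<in> edges T" using assms(3) by (simp add: adj_subdivide)
  then show ?thesis using branch_adj_root[OF assms(1) p(2)] p(1) by simp
qed

lemma partial_tds_unsubdivide:
  assumes y: "y \<in> inner_nbrs"
    and S: "partial_tds (subdivide T {{u, y}}) (piece {{u, y}}) (Inl u) True False S"
  shows "partial_tds T0 W0 (Inl u) True False (S - {Inr {u, y}})"
  unfolding partial_tds_def
proof (intro conjI impI)
  have e: "{u, y} \<in> edges T" "y \<noteq> u"
    using y inner_nbrs_verts[OF y] unfolding inner_nbrs_def by simp_all
  have "piece {{u, y}} = insert (Inr {u, y}) W0" unfolding piece_def by simp
  then have SW: "S \<subseteq> insert (Inr {u, y}) W0" using S unfolding partial_tds_def by simp
  then show "S - {Inr {u, y}} \<subseteq> W0" by blast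
  show uS: "Inl u \<in> S - {Inr {u, y}}" using S unfolding partial_tds_def by simp
  show "dominates T0 (S - {Inr {u, y}}) (W0 - {Inl u})"
    unfolding dominates_def
  proof
    fix x assume x: "x \<in> W0 - {Inl u}"
    then obtain a where "x = Inl a" using W0_cases by blast
    with x have a: "x = Inl a" "a \<noteq> u" by auto
    have "x \<in> piece {{u, y}} - {Inl u}" using x a(1) by simp
    then obtain s where s: "s \<in> S" "adj (subdivide T {{u, y}}) x s"
      using S unfolding partial_tds_def dominates_def by blast
    show "\<exists>s\<in>S - {Inr {u, y}}. adj T0 x s"
    proof (cases "s = Inr {u, y}")
      case True
      then have "a = y" using s(2) a by (auto simp: adj_subdivide)
      then have "adj T0 x (Inl u)" using a e by (simp add: adj_subdivide insert_commute)
      then show ?thesis using uS by blast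
    next
      case False
      then have "s \<in> W0" using s(1) SW by blast
      then obtain b where "s = Inl b" using W0_cases by blast
      then have "adj T0 x s" using s(2) a by (auto simp: adj_subdivide)
      then show ?thesis using s(1) False by blast
    qed
  qed
qed simp

end

section \<open>The parameters of a class 3 tree\<close>

locale class3_tree_with_leaf = tree_with_leaf +
  assumes class3: "class3 T"
begin

lemma PA_empty_eq: "PA {} = PB {} + 1"
proof -
  have "gamma_t (subdivide_leaf {}) \<le> gamma_t T"
    by (rule class3_no_increase[OF class3]) (use leaf_edge in auto)
  then show ?thesis
    using gamma_t_subdivide_leaf[of "{}"] gamma_t_eq_PA parameter_bounds(1)[of "{}"] by simp
qed

lemma PA_subdivide_le:
  assumes "F \<subseteq> leafless_edges" and "card F \<le> 2"
  shows "PA F \<le> PA {}"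
proof -
  have "F \<subseteq> edges T" using assms(1) leafless_edges_subset by blast
  then have "gamma_t (subdivide T F) \<le> gamma_t T"
    using class3_no_increase[OF class3 _ assms(2)] by blast
  then show ?thesis using gamma_t_subdivide[OF assms(1)] gamma_t_eq_PA by simp
qed

lemma PB_subdivide_le:
  assumes F: "F \<subseteq> leafless_edges" and "card F \<le> 1"
  shows "PB F \<le> PB {}"
proof -
  have "card (insert {u, u'} F) \<le> 2"
    using assms finite_leafless[OF F] by (simp add: card_insert_if)
  moreover have "insert {u, u'} F \<subseteq> edges T"
    using F leaf_edge leafless_edges_subset by blast
  ultimately have "gamma_t (subdivide_leaf F) \<le> gamma_t T"
    using class3_no_increase[OF class3] by blast
  then show ?thesis using gamma_t_subdivide_leaf[OF F] gamma_t_eq_PA PA_empty_eq by simp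
qed

lemma raising_set_cases:
  "(\<exists>F \<subseteq> leafless_edges. card F = 3 \<and> PB {} + 2 \<le> PA F)
    \<or> (\<exists>F \<subseteq> leafless_edges. card F = 2 \<and> PB {} + 1 \<le> PB F)"
proof -
  obtain F where F: "F \<subseteq> edges T" "card F = 3" "gamma_t T < gamma_t (subdivide T F)"
    using class3_increasing_triple[OF class3] by blast
  have F': "F - {{u, u'}} \<subseteq> leafless_edges"
    using F(1) edges_split_leaf_edge by blast
  show ?thesis
  proof (cases "{u, u'} \<in> F")
    case True
    then have "subdivide T F = subdivide_leaf (F - {{u, u'}})" by (simp add: insert_absorb)
    then have "PB {} + 1 \<le> PB (F - {{u, u'}})"
      using F(3) gamma_t_subdivide_leaf[OF F'] gamma_t_eq_PA PA_empty_eq by simp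
    moreover have "card (F - {{u, u'}}) = 2"
      using F(2) True finite_leafless[OF F'] by (simp add: card_Diff_singleton_if)
    ultimately show ?thesis using F' by blast
  next
    case False
    then have "F \<subseteq> leafless_edges" using F' by blast
    moreover have "PB {} + 2 \<le> PA F"
      using F(3) gamma_t_subdivide[OF calculation] gamma_t_eq_PA PA_empty_eq by simp
    ultimately show ?thesis using F(2) by blast
  qed
qed

lemma branch_root_dominated_inside:
  assumes y: "y \<in> inner_nbrs"
  shows "\<exists>S. partial_tds T0 W0 (Inl u) True False S \<and> card S \<le> PB {}
    \<and> (\<exists>t\<in>S. t \<noteq> Inl u \<and> adj T0 (Inl y) t)"
proof -
  let ?e = "{u, y}"
  have "?e \<in> edges T" "y \<noteq> u'" using y unfolding inner_nbrs_def by simp_all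
  then have e: "?e \<in> leafless_edges" using leaf_edge_ends(3) unfolding leafless_edges_def by simp
  interpret R: rooted_piece "subdivide T {?e}" "piece {?e}" "Inl u"
    by (rule rooted_piece_subdivide) (use e in simp)
  obtain S where S: "partial_tds (subdivide T {?e}) (piece {?e}) (Inl u) True False S"
    "card S = PB {?e}"
    using R.gamma_partial_witness unfolding PB_def by blast
  have "PB {?e} \<le> PB {}" by (rule PB_subdivide_le) (use e in simp_all)
  then have small: "card S \<le> PB {}" using S(2) by simp
  have S0: "partial_tds T0 W0 (Inl u) True False (S - {Inr ?e})"
    by (rule partial_tds_unsubdivide[OF y S(1)])
  have "Inr ?e \<notin> S"
  proof
    assume "Inr ?e \<in> S"
    then have "card (S - {Inr ?e}) < card S"
      using R.partial_tds_finite[OF S(1)] by (intro card_Diff1_less)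
    moreover have "PB {} \<le> card (S - {Inr ?e})"
      using rooted_piece.gamma_partial_le_card[OF rooted_piece_unsubdivided S0] unfolding PB_def .
    ultimately show False using small by simp
  qed
  then have S0': "partial_tds T0 W0 (Inl u) True False S" using S0 by simp
  have "Inl y \<in> piece {?e} - {Inl u}" using inner_nbrs_verts[OF y] by simp
  then obtain s where s: "s \<in> S" "adj (subdivide T {?e}) (Inl y) s"
    using S(1) unfolding partial_tds_def dominates_def by blast
  have "s \<in> W0" using s(1) S0' unfolding partial_tds_def by blast
  then obtain b where b: "s = Inl b" using W0_cases by blast
  then have "{y, b} \<in> edges T" "{y, b} \<noteq> ?e" using s(2) by (simp_all add: adj_subdivide)
  then have "b \<noteq> u" "adj T0 (Inl y) s" using b by (auto simp: adj_subdivide insert_commute)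
  then show ?thesis using S0' small s(1) b by blast
qed

text \<open>Every branch meets the rest of the tree only in \<open>u\<close>, so inside the branch of a new neighbour \<open>y\<close>
  an optimal set may be replaced by one dominating \<open>y\<close> from within the branch, while the branches
  already treated stay untouched.\<close>

lemma exists_PB_set_dominating_inner_nbrs:
  assumes "finite M" and "M \<subseteq> inner_nbrs"
  shows "\<exists>S. partial_tds T0 W0 (Inl u) True False S \<and> card S \<le> PB {}
    \<and> (\<forall>y\<in>M. \<exists>t\<in>S. t \<noteq> Inl u \<and> adj T0 (Inl y) t)"
  using assms
proof (induction M rule: finite_induct)
  case empty
  interpret R0: rooted_piece T0 W0 "Inl u" by (rule rooted_piece_unsubdivided)
  show ?case using R0.gamma_partial_witness unfolding PB_def by fastforce
next
  case (insert y0 M)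
  interpret R0: rooted_piece T0 W0 "Inl u" by (rule rooted_piece_unsubdivided)
  obtain S where S: "partial_tds T0 W0 (Inl u) True False S" "card S \<le> PB {}"
    "\<forall>y\<in>M. \<exists>t\<in>S. t \<noteq> Inl u \<and> adj T0 (Inl y) t"
    using insert by blast
  have y0: "y0 \<in> inner_nbrs" using insert by simp
  obtain S0 where S0: "partial_tds T0 W0 (Inl u) True False S0" "card S0 \<le> PB {}"
    "\<exists>t\<in>S0. t \<noteq> Inl u \<and> adj T0 (Inl y0) t"
    using branch_root_dominated_inside[OF y0] by blast
  let ?K = "Inl ` branch y0"
  define S' where "S' = (S - ?K) \<union> (S0 \<inter> ?K)"
  have "partial_tds T0 W0 (Inl u) True False S'"
    unfolding S'_def
    using R0.partial_tds_exchange[OF S(1) S0(1) branch_piece_subset[OF y0] branch_piece_closed[OF y0]] .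
  moreover have "card S' \<le> card S"
    unfolding S'_def using S0(2) unfolding PB_def
    by (rule R0.card_exchange_le[OF S(1) S0(1) _ branch_piece_subset[OF y0] branch_piece_closed[OF y0]])
  moreover have "\<exists>t\<in>S'. t \<noteq> Inl u \<and> adj T0 (Inl y) t" if "y \<in> insert y0 M" for y
  proof (cases "y = y0")
    case True
    then show ?thesis
      using S0(1,3) branch_piece_nbr[OF y0] unfolding S'_def partial_tds_def by blast
  next
    case False
    then have "y \<in> M" "y \<in> inner_nbrs" using that insert by auto
    then obtain t where t: "t \<in> S" "t \<noteq> Inl u" "adj T0 (Inl y) t" using S(3) by blast
    then have "t \<in> Inl ` branch y"
      using branch_piece_nbr[OF \<open>y \<in> inner_nbrs\<close>] S(1) unfolding partial_tds_def by blast
    then have "t \<notin> ?K" using branches_disjoint[OF \<open>y \<in> inner_nbrs\<close> y0 False] by blast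
    then show ?thesis using t unfolding S'_def by blast
  qed
  ultimately show ?case using S(2) by (intro exI[of _ S']) auto
qed

lemma Suc_PD_empty_le: "PD {} + 1 \<le> PB {}"
proof -
  interpret R0: rooted_piece T0 W0 "Inl u" by (rule rooted_piece_unsubdivided)
  obtain S where S: "partial_tds T0 W0 (Inl u) True False S" "card S \<le> PB {}"
    "\<forall>y\<in>inner_nbrs. \<exists>t\<in>S. t \<noteq> Inl u \<and> adj T0 (Inl y) t"
    using exists_PB_set_dominating_inner_nbrs[OF finite_inner_nbrs] by blast
  have uS: "Inl u \<in> S" using S(1) unfolding partial_tds_def by simp
  have "partial_tds T0 W0 (Inl u) False False (S - {Inl u})"
    unfolding partial_tds_def dominates_def
  proof (intro conjI ballI impI)
    show "S - {Inl u} \<subseteq> W0" using S(1) unfolding partial_tds_def by blast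
    fix x assume x: "x \<in> W0 - {Inl u}"
    then obtain a where a: "x = Inl a" "a \<in> verts T" "a \<noteq> u'" "a \<noteq> u" using W0_cases by blast
    obtain y where y: "y \<in> inner_nbrs" "a \<in> branch y" using branch_cover a(2-4) by blast
    obtain s where s: "s \<in> S" "adj T0 x s"
      using S(1) x unfolding partial_tds_def dominates_def by blast
    show "\<exists>s\<in>S - {Inl u}. adj T0 x s"
    proof (cases "s = Inl u")
      case True
      then have "a = y" using branch_piece_adj_root[OF y(1)] y(2) s(2) a(1) by blast
      then show ?thesis using S(3) y(1) a(1) by blast
    next
      case False
      then show ?thesis using s by blast
    qed
  qed simp_all
  then have "PD {} \<le> card (S - {Inl u})" using R0.gamma_partial_le_card unfolding PD_def by blast
  moreover have "card (S - {Inl u}) < card S"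
    using R0.partial_tds_finite[OF S(1)] uS by (rule card_Diff1_less)
  ultimately show ?thesis using S(2) by simp
qed

lemma class3_parameters: "PA {} = PB {} + 1" "PD {} + 1 = PB {}" "PB {} \<le> PC {}"
  using PA_empty_eq Suc_PD_empty_le parameter_bounds(2,3)[of "{}"] by simp_all

end

section \<open>Joining two trees\<close>

lemma join_trees_commute: "join_trees T2 T1 v v' u u' = join_trees T1 T2 u u' v v'"
  unfolding join_trees_def by (auto simp: insert_commute)

locale joined_trees = A: tree_with_leaf T1 u u' + B: tree_with_leaf T2 v v'
  for T1 :: "'a graph" and u u' and T2 :: "'a graph" and v v' +
  assumes disjoint: "verts T1 \<inter> verts T2 = {}"
begin

abbreviation "Tuv \<equiv> join_trees T1 T2 u u' v v'"
abbreviation "W1 F \<equiv> A.piece (F \<inter> A.leafless_edges)"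
abbreviation "W2 F \<equiv> B.piece (F \<inter> B.leafless_edges)"

lemma swap: "joined_trees T2 v v' T1 u u'"
  using disjoint by (intro joined_trees.intro joined_trees_axioms.intro B.tree_with_leaf_axioms
      A.tree_with_leaf_axioms) blast

lemma v_notin_T1: "v \<notin> verts T1" "v' \<notin> verts T1"
  using disjoint B.leaf_edge_ends by blast+

lemma u_notin_T2: "u \<notin> verts T2" "u' \<notin> verts T2"
  using disjoint A.leaf_edge_ends by blast+

lemma edges_join: "edges Tuv = A.leafless_edges \<union> B.leafless_edges \<union> {{u, v}}"
proof -
  have "v' \<notin> e" if "e \<in> A.leafless_edges" for e
    using A.leafless_edge_end[OF that] v_notin_T1 by blast
  moreover have "u' \<notin> e" if "e \<in> B.leafless_edges" for e
    using B.leafless_edge_end[OF that] u_notin_T2 by blast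
  moreover have "u' \<notin> {u, v}" "v' \<notin> {u, v}"
    using A.leaf_edge_ends B.leaf_edge_ends v_notin_T1 u_notin_T2 by auto
  ultimately show ?thesis
    unfolding join_trees_def A.leafless_edges_def B.leafless_edges_def by (auto simp: edges_def)
qed

lemma verts_join: "verts Tuv = (verts T1 - {u'}) \<union> (verts T2 - {v'})"
  using v_notin_T1 u_notin_T2 unfolding join_trees_def verts_def by auto

lemma join_edge: "{u, v} \<in> edges Tuv"
  unfolding edges_join by simp

lemma join_edge_not_leafless: "{u, v} \<notin> A.leafless_edges" "{u, v} \<notin> B.leafless_edges"
  using A.leafless_edge_end[of "{u, v}" v] B.leafless_edge_end[of "{u, v}" u] v_notin_T1 u_notin_T2
  by auto

lemma leafless_edges_disjoint: "A.leafless_edges \<inter> B.leafless_edges = {}"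
proof -
  have False if eA: "e \<in> A.leafless_edges" and eB: "e \<in> B.leafless_edges" for e
  proof -
    obtain a b where "e = {a, b}" using A.leafless_edge_ends[OF eA] by blast
    then have "a \<in> verts T1" "a \<in> verts T2"
      using A.leafless_edge_end[OF eA] B.leafless_edge_end[OF eB] by auto
    then show False using disjoint by blast
  qed
  then show ?thesis by blast
qed

lemma edge_join_left:
  assumes "p \<in> verts T1" and "e \<in> edges Tuv" and "p \<in> e"
  shows "e \<in> A.leafless_edges \<or> (p = u \<and> e = {u, v})"
proof -
  from assms(2) consider "e \<in> A.leafless_edges" | "e \<in> B.leafless_edges" | "e = {u, v}"
    unfolding edges_join by blast
  then show ?thesis
  proof cases
    case 2
    then have "p \<in> verts T2" using B.leafless_edge_end assms(3) by blast
    then show ?thesis using assms(1) disjoint by blast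
  next
    case 3
    then show ?thesis using assms(1,3) v_notin_T1 by auto
  qed simp
qed

lemma adj_join_left:
  assumes F: "F \<subseteq> edges Tuv" and x: "x \<in> W1 F" and a: "adj (subdivide Tuv F) x y"
  shows "y \<in> W1 F
    \<or> (x = Inl u \<and> ((y = Inl v \<and> {u, v} \<notin> F) \<or> (y = Inr {u, v} \<and> {u, v} \<in> F)))"
proof (cases x)
  case (Inl p)
  then have p: "p \<in> verts T1" using x by auto
  show ?thesis
  proof (cases y)
    case (Inl q)
    then have pq: "{p, q} \<in> edges Tuv" "{p, q} \<notin> F"
      using a \<open>x = Inl p\<close> by (simp_all add: adj_subdivide)
    then have "{p, q} \<in> A.leafless_edges \<or> (p = u \<and> {p, q} = {u, v})"
      using edge_join_left[OF p] by simp
    then show ?thesis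
    proof
      assume "{p, q} \<in> A.leafless_edges"
      then show ?thesis using A.leafless_edge_end Inl by simp
    next
      assume "p = u \<and> {p, q} = {u, v}"
      then show ?thesis using pq(2) Inl \<open>x = Inl p\<close> by (auto simp: doubleton_eq_iff)
    qed
  next
    case (Inr e)
    then have "e \<in> F" "p \<in> e" using a \<open>x = Inl p\<close> by (simp_all add: adj_subdivide)
    then show ?thesis using edge_join_left[OF p] F Inr \<open>x = Inl p\<close> by auto
  qed
next
  case (Inr e)
  then have "e \<in> A.leafless_edges" using x by auto
  then show ?thesis
    using a Inr A.leafless_edge_end by (cases y) (auto simp: adj_subdivide)
qed

lemma adj_join_left_eq:
  assumes x: "x \<in> W1 F" and y: "y \<in> W1 F"
  shows "adj (subdivide Tuv F) x y = adj (subdivide T1 (F \<inter> A.leafless_edges)) x y"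
proof (cases x; cases y)
  fix p q assume xy: "x = Inl p" "y = Inl q"
  then have p: "p \<in> verts T1" "p \<noteq> u'" and "q \<noteq> v" "q \<noteq> u'"
    using x y v_notin_T1 by auto
  have "{p, q} \<in> edges Tuv \<longleftrightarrow> {p, q} \<in> A.leafless_edges"
  proof
    assume "{p, q} \<in> edges Tuv"
    then have "{p, q} \<in> A.leafless_edges \<or> (p = u \<and> {p, q} = {u, v})"
      using edge_join_left[OF p(1)] by simp
    then show "{p, q} \<in> A.leafless_edges" using \<open>q \<noteq> v\<close> by (auto simp: doubleton_eq_iff)
  qed (simp add: edges_join)
  moreover have "{p, q} \<in> edges T1 \<longleftrightarrow> {p, q} \<in> A.leafless_edges"
    using p(2) \<open>q \<noteq> u'\<close> unfolding A.leafless_edges_def by simp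
  ultimately show ?thesis using xy by (auto simp: adj_subdivide)
qed (use x y in \<open>auto simp: adj_subdivide\<close>)

lemma pieces_disjoint: "W1 F \<inter> W2 F = {}"
  using disjoint leafless_edges_disjoint unfolding A.piece_def B.piece_def by blast

lemma verts_subdivide_join:
  assumes "F \<subseteq> edges Tuv"
  shows "verts (subdivide Tuv F) = W1 F \<union> W2 F \<union> Inr ` (F \<inter> {{u, v}})"
  using assms unfolding verts_subdivide verts_join A.piece_def B.piece_def edges_join by blast

lemma attached_join_left:
  assumes F: "F \<subseteq> edges Tuv"
  shows "attached_piece (subdivide Tuv F) (W1 F) (Inl u)"
proof (intro attached_piece.intro attached_piece_axioms.intro)
  show "rooted_piece (subdivide Tuv F) (W1 F) (Inl u)"
    by (rule rooted_piece_cong[OF A.rooted_piece_subdivide]) (use adj_join_left_eq in auto)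
  show "W1 F \<subseteq> verts (subdivide Tuv F)" using verts_subdivide_join[OF F] by blast
  show "\<forall>x\<in>W1 F - {Inl u}. \<forall>y. adj (subdivide Tuv F) x y \<longrightarrow> y \<in> W1 F"
    using adj_join_left[OF F] by blast
qed

lemma gamma_partial_join_left:
  "gamma_partial (subdivide Tuv F) (W1 F) (Inl u) i d
    = gamma_partial (subdivide T1 (F \<inter> A.leafless_edges)) (W1 F) (Inl u) i d"
  using A.leaf_edge_ends adj_join_left_eq by (intro gamma_partial_cong) auto

end

context joined_trees
begin

lemma attached_join_right:
  "F \<subseteq> edges Tuv \<Longrightarrow> attached_piece (subdivide Tuv F) (W2 F) (Inl v)"
  using joined_trees.attached_join_left[OF swap] by (simp add: join_trees_commute)

lemma adj_join_right:
  assumes "F \<subseteq> edges Tuv" and "x \<in> W2 F" and "adj (subdivide Tuv F) x y"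
  shows "y \<in> W2 F
    \<or> (x = Inl v \<and> ((y = Inl u \<and> {u, v} \<notin> F) \<or> (y = Inr {u, v} \<and> {u, v} \<in> F)))"
  using joined_trees.adj_join_left[OF swap, of F x y] assms
  by (simp add: join_trees_commute insert_commute)

lemma gamma_partial_join_right:
  "gamma_partial (subdivide Tuv F) (W2 F) (Inl v) i d
    = gamma_partial (subdivide T2 (F \<inter> B.leafless_edges)) (W2 F) (Inl v) i d"
  using joined_trees.gamma_partial_join_left[OF swap] by (simp add: join_trees_commute)

lemma glued_by_edge_join:
  assumes F: "F \<subseteq> edges Tuv" and uv: "{u, v} \<notin> F"
  shows "glued_by_edge (subdivide Tuv F) (W1 F) (Inl u) (W2 F) (Inl v)"
proof (intro glued_by_edge.intro glued_by_edge_axioms.intro attached_join_left[OF F]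
    attached_join_right[OF F] pieces_disjoint)
  show "verts (subdivide Tuv F) = W1 F \<union> W2 F" using verts_subdivide_join[OF F] uv by auto
  show "adj (subdivide Tuv F) (Inl u) (Inl v)" using join_edge uv by (simp add: adj_subdivide)
  show "\<forall>y. adj (subdivide Tuv F) (Inl u) y \<longrightarrow> y \<in> W1 F \<or> y = Inl v"
    using adj_join_left[OF F, of "Inl u"] A.leaf_edge_ends uv by simp
  show "\<forall>y. adj (subdivide Tuv F) (Inl v) y \<longrightarrow> y \<in> W2 F \<or> y = Inl u"
    using adj_join_right[OF F, of "Inl v"] B.leaf_edge_ends uv by simp
qed

lemma glued_by_path_join:
  assumes F: "F \<subseteq> edges Tuv" and uv: "{u, v} \<in> F"
  shows "glued_by_path (subdivide Tuv F) (W1 F) (Inl u) (W2 F) (Inl v) (Inr {u, v})"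
proof (intro glued_by_path.intro glued_by_path_axioms.intro attached_join_left[OF F]
    attached_join_right[OF F] pieces_disjoint allI)
  show "Inr {u, v} \<notin> W1 F" "Inr {u, v} \<notin> W2 F" using join_edge_not_leafless by simp_all
  show "verts (subdivide Tuv F) = insert (Inr {u, v}) (W1 F \<union> W2 F)"
    using verts_subdivide_join[OF F] uv by auto
  fix y
  show "adj (subdivide Tuv F) (Inr {u, v}) y = (y = Inl u \<or> y = Inl v)"
    using uv by (cases y) (auto simp: adj_subdivide)
  show "adj (subdivide Tuv F) (Inl u) y \<longrightarrow> y \<in> W1 F \<or> y = Inr {u, v}"
    using adj_join_left[OF F, of "Inl u" y] A.leaf_edge_ends uv by simp
  show "adj (subdivide Tuv F) (Inl v) y \<longrightarrow> y \<in> W2 F \<or> y = Inr {u, v}"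
    using adj_join_right[OF F, of "Inl v" y] B.leaf_edge_ends uv by simp
qed

lemma join_parameters:
  "gamma_partial (subdivide Tuv F) (W1 F) (Inl u) True True = A.PA (F \<inter> A.leafless_edges)"
  "gamma_partial (subdivide Tuv F) (W1 F) (Inl u) True False = A.PB (F \<inter> A.leafless_edges)"
  "gamma_partial (subdivide Tuv F) (W1 F) (Inl u) False True = A.PC (F \<inter> A.leafless_edges)"
  "gamma_partial (subdivide Tuv F) (W1 F) (Inl u) False False = A.PD (F \<inter> A.leafless_edges)"
  "gamma_partial (subdivide Tuv F) (W2 F) (Inl v) True True = B.PA (F \<inter> B.leafless_edges)"
  "gamma_partial (subdivide Tuv F) (W2 F) (Inl v) True False = B.PB (F \<inter> B.leafless_edges)"
  "gamma_partial (subdivide Tuv F) (W2 F) (Inl v) False True = B.PC (F \<inter> B.leafless_edges)"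
  "gamma_partial (subdivide Tuv F) (W2 F) (Inl v) False False = B.PD (F \<inter> B.leafless_edges)"
  unfolding A.PA_def A.PB_def A.PC_def A.PD_def B.PA_def B.PB_def B.PC_def B.PD_def
  by (simp_all add: gamma_partial_join_left gamma_partial_join_right)

theorem gamma_t_join_subdivide_edge:
  assumes "F \<subseteq> edges Tuv" and "{u, v} \<notin> F"
  defines "F1 \<equiv> F \<inter> A.leafless_edges" and "F2 \<equiv> F \<inter> B.leafless_edges"
  shows "gamma_t (subdivide Tuv F) = min (min (A.PB F1 + B.PB F2) (A.PA F1 + B.PD F2))
    (min (A.PD F1 + B.PA F2) (A.PC F1 + B.PC F2))"
  using glued_by_edge.gamma_t_eq[OF glued_by_edge_join[OF assms(1,2)]]
  unfolding join_parameters F1_def F2_def .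

theorem gamma_t_join_subdivide_path:
  assumes "F \<subseteq> edges Tuv" and "{u, v} \<in> F"
  defines "F1 \<equiv> F \<inter> A.leafless_edges" and "F2 \<equiv> F \<inter> B.leafless_edges"
  shows "gamma_t (subdivide Tuv F) = min (min (A.PA F1 + B.PC F2) (A.PC F1 + B.PA F2))
    (min (A.PB F1 + B.PD F2 + 1) (A.PD F1 + B.PB F2 + 1))"
  using glued_by_path.gamma_t_eq[OF glued_by_path_join[OF assms(1,2)]]
  unfolding join_parameters F1_def F2_def .

end

locale class3_joined_trees = joined_trees +
  A: class3_tree_with_leaf T1 u u' + B: class3_tree_with_leaf T2 v v'
begin

lemma gamma_t_join: "gamma_t Tuv = A.PB {} + B.PB {}"
proof -
  have "gamma_t Tuv = gamma_t (subdivide Tuv {})" by (simp add: gamma_t_subdivide_empty)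
  also have "\<dots> = min (min (A.PB {} + B.PB {}) (A.PA {} + B.PD {}))
      (min (A.PD {} + B.PA {}) (A.PC {} + B.PC {}))"
    using gamma_t_join_subdivide_edge[of "{}"] by simp
  also have "\<dots> = A.PB {} + B.PB {}"
    using A.class3_parameters B.class3_parameters by simp
  finally show ?thesis .
qed

lemma card_join_edges_split:
  assumes F: "F \<subseteq> edges Tuv"
  shows "card (F \<inter> A.leafless_edges) + card (F \<inter> B.leafless_edges) + (if {u, v} \<in> F then 1 else 0)
    = card F"
proof -
  have fin: "finite F"
    using F A.finite_leafless B.finite_leafless unfolding edges_join by (blast intro: finite_subset)
  have "F = (F \<inter> A.leafless_edges) \<union> (F \<inter> B.leafless_edges) \<union> (F \<inter> {{u, v}})"
    using F unfolding edges_join by blast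
  moreover have "(F \<inter> A.leafless_edges) \<inter> (F \<inter> B.leafless_edges) = {}"
    "((F \<inter> A.leafless_edges) \<union> (F \<inter> B.leafless_edges)) \<inter> (F \<inter> {{u, v}}) = {}"
    using leafless_edges_disjoint join_edge_not_leafless by blast+
  ultimately have "card F = card (F \<inter> A.leafless_edges) + card (F \<inter> B.leafless_edges) + card (F \<inter> {{u, v}})"
    using fin by (metis card_Un_disjoint finite_Int finite_Un)
  then show ?thesis by (simp add: Int_insert_right)
qed

lemma gamma_t_join_subdivide_edge_le:
  assumes F: "F \<subseteq> edges Tuv" and uv: "{u, v} \<notin> F" and small: "card F \<le> 2"
  shows "gamma_t (subdivide Tuv F) \<le> A.PB {} + B.PB {}"
proof -
  let ?F1 = "F \<inter> A.leafless_edges" and ?F2 = "F \<inter> B.leafless_edges"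
  have F12: "?F1 \<subseteq> A.leafless_edges" "?F2 \<subseteq> B.leafless_edges" by auto
  have cards: "card ?F1 + card ?F2 \<le> 2" using card_join_edges_split[OF F] small by simp
  note gamma = gamma_t_join_subdivide_edge[OF F uv]
  have empty: "card ?F1 = 0 \<Longrightarrow> ?F1 = {}" "card ?F2 = 0 \<Longrightarrow> ?F2 = {}"
    using A.finite_leafless[OF F12(1)] B.finite_leafless[OF F12(2)] by simp_all
  consider "card ?F1 \<le> 1" "card ?F2 \<le> 1" | "card ?F1 = 2" "?F2 = {}" | "card ?F2 = 2" "?F1 = {}"
    using cards empty by linarith
  then show ?thesis
  proof cases
    case 1
    then show ?thesis
      using gamma A.PB_subdivide_le[OF F12(1)] B.PB_subdivide_le[OF F12(2)] by fastforce
  next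
    case 2
    then show ?thesis
      using gamma A.PA_subdivide_le[OF F12(1)] A.class3_parameters B.class3_parameters by fastforce
  next
    case 3
    then show ?thesis
      using gamma B.PA_subdivide_le[OF F12(2)] A.class3_parameters B.class3_parameters by fastforce
  qed
qed

lemma gamma_t_join_subdivide_path_le:
  assumes F: "F \<subseteq> edges Tuv" and uv: "{u, v} \<in> F" and small: "card F \<le> 2"
  shows "gamma_t (subdivide Tuv F) \<le> A.PB {} + B.PB {}"
proof -
  let ?F1 = "F \<inter> A.leafless_edges" and ?F2 = "F \<inter> B.leafless_edges"
  have F12: "?F1 \<subseteq> A.leafless_edges" "?F2 \<subseteq> B.leafless_edges" by auto
  have cards: "card ?F1 + card ?F2 \<le> 1" using card_join_edges_split[OF F] small uv by simp
  note gamma = gamma_t_join_subdivide_path[OF F uv]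
  have empty: "card ?F1 = 0 \<Longrightarrow> ?F1 = {}" "card ?F2 = 0 \<Longrightarrow> ?F2 = {}"
    using A.finite_leafless[OF F12(1)] B.finite_leafless[OF F12(2)] by simp_all
  consider "?F2 = {}" "card ?F1 \<le> 1" | "?F1 = {}" "card ?F2 \<le> 1"
    using cards empty by linarith
  then show ?thesis
  proof cases
    case 1
    then show ?thesis using gamma A.PB_subdivide_le[OF F12(1)] B.class3_parameters by fastforce
  next
    case 2
    then show ?thesis using gamma B.PB_subdivide_le[OF F12(2)] A.class3_parameters by fastforce
  qed
qed

lemma gamma_t_join_subdivide_le:
  "F \<subseteq> edges Tuv \<Longrightarrow> card F \<le> 2 \<Longrightarrow> gamma_t (subdivide Tuv F) \<le> A.PB {} + B.PB {}"
  using gamma_t_join_subdivide_edge_le gamma_t_join_subdivide_path_le by blast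

lemma exists_join_raising_triple:
  "\<exists>F \<subseteq> edges Tuv. card F = 3 \<and> A.PB {} + B.PB {} < gamma_t (subdivide Tuv F)"
  using A.raising_set_cases
proof
  assume "\<exists>F \<subseteq> A.leafless_edges. card F = 3 \<and> A.PB {} + 2 \<le> A.PA F"
  then obtain F where F1: "F \<subseteq> A.leafless_edges" and card: "card F = 3"
    and big: "A.PB {} + 2 \<le> A.PA F" by blast
  have F: "F \<subseteq> edges Tuv" "{u, v} \<notin> F" using F1 join_edge_not_leafless unfolding edges_join by blast+
  have "F \<inter> A.leafless_edges = F" "F \<inter> B.leafless_edges = {}"
    using F1 leafless_edges_disjoint by blast+
  then have "A.PB {} + B.PB {} < gamma_t (subdivide Tuv F)"
    using gamma_t_join_subdivide_edge[OF F] A.parameter_bounds[OF F1] big B.class3_parameters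
    by simp
  then show ?thesis using F card by blast
next
  assume "\<exists>F \<subseteq> A.leafless_edges. card F = 2 \<and> A.PB {} + 1 \<le> A.PB F"
  then obtain F' where F1: "F' \<subseteq> A.leafless_edges" and card: "card F' = 2"
    and big: "A.PB {} + 1 \<le> A.PB F'" by blast
  let ?F = "insert {u, v} F'"
  have F: "?F \<subseteq> edges Tuv" "{u, v} \<in> ?F" using F1 unfolding edges_join by blast+
  have "card ?F = 3"
    using card A.finite_leafless[OF F1] F1 join_edge_not_leafless by (subst card_insert_disjoint) auto
  moreover have "?F \<inter> A.leafless_edges = F'" "?F \<inter> B.leafless_edges = {}"
    using F1 leafless_edges_disjoint join_edge_not_leafless by blast+
  then have "A.PB {} + B.PB {} < gamma_t (subdivide Tuv ?F)"
    using gamma_t_join_subdivide_path[OF F] A.parameter_bounds[OF F1] big B.class3_parameters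
    by simp
  ultimately show ?thesis using F by blast
qed

theorem class3_join: "class3 Tuv"
  using exists_join_raising_triple gamma_t_join_subdivide_le
  by (intro class3I) (simp_all add: gamma_t_join)

end

theorem mainTheorem9:
  fixes T1 T2 :: "'a graph" and u u' v v' :: 'a
  assumes "is_tree T1" and "is_tree T2"
    and "verts T1 \<inter> verts T2 = {}"
    and "weak_support T1 u" and "is_leaf T1 u'" and "adj T1 u u'"
    and "weak_support T2 v" and "is_leaf T2 v'" and "adj T2 v v'"
    and "class3 T1" and "class3 T2"
  shows "class3 (join_trees T1 T2 u u' v v')"
proof -
  have "4 \<le> card (verts T1)" "4 \<le> card (verts T2)"
    using class3_tree_card_verts assms by blast+
  then interpret class3_joined_trees T1 u u' T2 v v'
    using assms
    by (intro class3_joined_trees.intro joined_trees.intro joined_trees_axioms.intro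
        class3_tree_with_leaf.intro class3_tree_with_leaf_axioms.intro tree_with_leaf.intro) auto
  show ?thesis by (rule class3_join)
qed

end
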